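(* A bijective real-linear map $T\colon M_2(\mathbb F)\to M_2(\mathbb F)$ maps $\mathcal U_2(\mathbb F)$ into $\mathbb F\,\mathcal U_2(\mathbb F)$ if and only if $T(I)$ is a nonzero multiple of a matrix in $\mathcal U_2(\mathbb F)$ and the map $L(X)=T(I)^{-1}T(X)$ satisfies one of: (i) $\mathbb F=\mathbb R$ and $L(\mathbf V_1)=\mathbf V_1$, $L(\mathbf V_2)=\mathbf V_2$; (ii) $\mathbb F=\mathbb C$ and there are $U,V\in\mathcal U_2(\mathbb C)$ and $\mu\in\mathbb C\setminus\mathbb R$ such that the (unital) map $L'(X)=VL(UXU^* )V^*$ satisfies $L'(iI)=\mu I$ and, for $j=1,2,3$, $$L'(\Sigma_j)=a_j\Sigma_j+b_jI,\qquad L'(i\Sigma_j)=\mu L'(\Sigma_j),$$ for some real $a_1,a_2,a_3,b_1,b_2,b_3$ with $a_1\ge a_2\ge|a_3|>0$. Moreover, if in case (ii) $T$ is complex-linear then $\mu=i$.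
   Context: $\mathbb F$ is $\mathbb C$ or $\mathbb R$; $\mathcal U_2(\mathbb F)=\{A\in M_2(\mathbb F):A^*A=I\}$ with $A^*$ the conjugate transpose (transpose if real); $\mathbb F\,\mathcal U_2(\mathbb F)=\{\gamma U:\gamma\in\mathbb F, U\in\mathcal U_2(\mathbb F)\}$. $E_{ij}$ denotes the matrix unit. $\mathbf V_1=\mathrm{Span}_{\mathbb R}\{I_2,E_{12}-E_{21}\}$, $\mathbf V_2=\mathrm{Span}_{\mathbb R}\{E_{11}-E_{22},E_{12}+E_{21}\}$ (subspaces of $M_2(\mathbb R)$). $\Sigma_1=\begin{pmatrix}0&i\\ i&0\end{pmatrix}$, $\Sigma_2=\begin{pmatrix}0&1\\-1&0\end{pmatrix}$, $\Sigma_3=\begin{pmatrix}i&0\\0&-i\end{pmatrix}$. *)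

theory Defs
  imports "HOL-Analysis.Analysis"
begin

definition cadj :: "complex^2^2 \<Rightarrow> complex^2^2" where
  "cadj A = (\<chi> i j. cnj (A $ j $ i))"

definition csmult :: "complex \<Rightarrow> complex^2^2 \<Rightarrow> complex^2^2" where
  "csmult c A = (\<chi> i j. c * A $ i $ j)"

definition U2R :: "(real^2^2) set" where
  "U2R = {A. transpose A ** A = mat 1}"

definition FU2R :: "(real^2^2) set" where
  "FU2R = {\<gamma> *\<^sub>R U | \<gamma> U. U \<in> U2R}"

definition U2C :: "(complex^2^2) set" where
  "U2C = {A. cadj A ** A = mat 1}"

definition FU2C :: "(complex^2^2) set" where
  "FU2C = {csmult \<gamma> U | \<gamma> U. U \<in> U2C}"

definition Eunit :: "2 \<Rightarrow> 2 \<Rightarrow> real^2^2" where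
  "Eunit i j = (\<chi> a b. if a = i \<and> b = j then 1 else 0)"

definition V1 :: "(real^2^2) set" where
  "V1 = span {mat 1, Eunit 1 2 - Eunit 2 1}"

definition V2 :: "(real^2^2) set" where
  "V2 = span {Eunit 1 1 - Eunit 2 2, Eunit 1 2 + Eunit 2 1}"

definition Sig :: "nat \<Rightarrow> complex^2^2" where
  "Sig j = (if j = 1 then vector [vector [0, \<i>], vector [\<i>, 0]]
              else if j = 2 then vector [vector [0, 1], vector [-1, 0]]
              else vector [vector [\<i>, 0], vector [0, -\<i>]])"

definition complex_linear :: "(complex^2^2 \<Rightarrow> complex^2^2) \<Rightarrow> bool" where
  "complex_linear T \<longleftrightarrow> linear T \<and> (\<forall>c X. T (csmult c X) = csmult c (T X))"

definition caseII :: "(complex^2^2 \<Rightarrow> complex^2^2) \<Rightarrow> complex^2^2 \<Rightarrow> complex^2^2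
   \<Rightarrow> complex \<Rightarrow> (nat \<Rightarrow> real) \<Rightarrow> (nat \<Rightarrow> real) \<Rightarrow> bool" where
  "caseII L U V \<mu> a b \<longleftrightarrow>
     U \<in> U2C \<and> V \<in> U2C \<and> \<mu> \<notin> \<real> \<and>
     (let L' = (\<lambda>X. V ** L (U ** X ** cadj U) ** cadj V) in
        L' (csmult \<i> (mat 1)) = csmult \<mu> (mat 1) \<and>
        (\<forall>j\<in>{1,2,3}. L' (Sig j) = a j *\<^sub>R Sig j + b j *\<^sub>R mat 1 \<and>
                       L' (csmult \<i> (Sig j)) = csmult \<mu> (L' (Sig j)))) \<and>
     a 1 \<ge> a 2 \<and> a 2 \<ge> \<bar>a 3\<bar> \<and> \<bar>a 3\<bar> > 0"

end

theory Submission
  imports Defs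
begin

(*
  If T maps unitaries to multiples of unitaries, then T(I) = \<gamma>W and the normalized map
  L = T(I)\<inverse>T is a unital linear bijection with L(\<bbbF>U\<^sub>2) \<subseteq> \<bbbF>U\<^sub>2, because \<bbbF>U\<^sub>2 is closed under
  products; conversely such an L gives back T.

  Real case: \<real>U\<^sub>2(\<real>) = V\<^sub>1 \<union> V\<^sub>2 is the union of two complementary planes.  Each subspace L(V\<^sub>i)
  lies in this union, hence in one of the planes; since L is bijective and L(I) = I \<in> V\<^sub>1, L fixes both.

  Complex case: \<complex>U\<^sub>2(\<complex>) = \<complex>\<bbbH>, where the quaternions \<bbbH> = \<real>\<^sup>4 sit in M\<^sub>2(\<complex>) with i, j, k
  mapped to \<Sigma>\<^sub>1, \<Sigma>\<^sub>2, \<Sigma>\<^sub>3.  An injective linear map \<real>\<^sup>4 \<rightarrow> \<complex>\<bbbH> has its image in a single z\<bbbH>: the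
  image is a subspace covered by z\<bbbH> and the two-dimensional \<complex>q.  Applied to L on \<bbbH> and on i\<bbbH>
  this gives L(\<bbbH>) = \<bbbH> and L(iq) = \<mu>L(q) with \<mu> \<notin> \<real>.  The real-linear map A = L|\<bbbH> fixes 1; a
  singular value decomposition of its compression to the pure quaternions \<real>\<^sup>3 is realized by
  rotations q \<mapsto> u q u\<^sup>*, i.e. by conjugation with unitary matrices, which yields U, V, a\<^sub>j, b\<^sub>j.
  Conversely a map of this form visibly maps \<complex>\<bbbH> into itself.  If T is complex-linear, then L(iI) = iI
  forces \<mu> = i.
*)

section \<open>Quaternions and their rotations\<close>

lemma vec4_eq_iff: "(x::'a^4) = y \<longleftrightarrow> x$1 = y$1 \<and> x$2 = y$2 \<and> x$3 = y$3 \<and> x$4 = y$4"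
  by (auto simp: vec_eq_iff forall_4)

definition quat :: "real \<Rightarrow> real \<Rightarrow> real \<Rightarrow> real \<Rightarrow> real^4" where
  "quat a b c d = (\<chi> i. if i = 1 then a else if i = 2 then b else if i = 3 then c else d)"

lemma quat_nth [simp]:
  "quat a b c d $ 1 = a" "quat a b c d $ 2 = b" "quat a b c d $ 3 = c" "quat a b c d $ 4 = d"
  by (simp_all add: quat_def)

lemma quat_arith [simp]:
  "quat a b c d + quat a' b' c' d' = quat (a+a') (b+b') (c+c') (d+d')"
  "quat a b c d - quat a' b' c' d' = quat (a-a') (b-b') (c-c') (d-d')"
  "r *\<^sub>R quat a b c d = quat (r*a) (r*b) (r*c) (r*d)"
  by (simp_all add: vec4_eq_iff)

abbreviation e1 :: "real^4" where "e1 \<equiv> axis 1 1"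
abbreviation e2 :: "real^4" where "e2 \<equiv> axis 2 1"
abbreviation e3 :: "real^4" where "e3 \<equiv> axis 3 1"
abbreviation e4 :: "real^4" where "e4 \<equiv> axis 4 1"

lemma axis_eq_quat:
  "e1 = quat 1 0 0 0" "e2 = quat 0 1 0 0" "e3 = quat 0 0 1 0" "e4 = quat 0 0 0 1"
  by (simp_all add: vec4_eq_iff axis_def)

lemma axis_nth_1 [simp]: "e1$1 = 1" "e2$1 = 0" "e3$1 = 0" "e4$1 = 0"
  by (simp_all add: axis_eq_quat)

lemma inner_vec4: "inner (x::real^4) y = x$1*y$1 + x$2*y$2 + x$3*y$3 + x$4*y$4"
  by (simp add: inner_vec_def sum_4)

lemma vec4_expand: "x = x$1 *\<^sub>R e1 + x$2 *\<^sub>R e2 + x$3 *\<^sub>R e3 + x$4 *\<^sub>R e4"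
  by (simp add: vec4_eq_iff axis_eq_quat)

definition qmult :: "real^4 \<Rightarrow> real^4 \<Rightarrow> real^4" where
  "qmult x y = quat (x$1*y$1 - x$2*y$2 - x$3*y$3 - x$4*y$4)
                    (x$1*y$2 + x$2*y$1 - x$3*y$4 + x$4*y$3)
                    (x$1*y$3 + x$3*y$1 + x$2*y$4 - x$4*y$2)
                    (x$1*y$4 + x$4*y$1 - x$2*y$3 + x$3*y$2)"

definition qcnj :: "real^4 \<Rightarrow> real^4" where
  "qcnj x = quat (x$1) (-(x$2)) (-(x$3)) (-(x$4))"

definition qnorm2 :: "real^4 \<Rightarrow> real" where
  "qnorm2 x = x$1^2 + x$2^2 + x$3^2 + x$4^2"

lemma qnorm2_eq_inner: "qnorm2 x = inner x x"
  by (simp add: qnorm2_def inner_vec4 power2_eq_square)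

lemma qnorm2_eq_norm: "qnorm2 x = (norm x)^2"
  by (simp add: qnorm2_eq_inner power2_norm_eq_inner)

lemma qnorm2_eq_1_iff: "qnorm2 x = 1 \<longleftrightarrow> norm x = 1"
  using norm_ge_zero[of x] by (auto simp: qnorm2_eq_norm power2_eq_1_iff simp del: norm_ge_zero)

lemma qnorm2_nonneg: "qnorm2 x \<ge> 0"
  by (simp add: qnorm2_def)

lemma qnorm2_scaleR: "qnorm2 (c *\<^sub>R x) = c^2 * qnorm2 x"
  by (simp add: qnorm2_eq_norm power_mult_distrib)

lemma qnorm2_qcnj: "qnorm2 (qcnj x) = qnorm2 x"
  by (simp add: qnorm2_def qcnj_def)

lemma qnorm2_qmult: "qnorm2 (qmult x y) = qnorm2 x * qnorm2 y"
  by (simp add: qmult_def qnorm2_def power2_eq_square algebra_simps)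

lemma qmult_assoc: "qmult (qmult x y) z = qmult x (qmult y z)"
  by (simp add: vec4_eq_iff qmult_def algebra_simps)

lemma qcnj_qmult: "qcnj (qmult x y) = qmult (qcnj y) (qcnj x)"
  by (simp add: qcnj_def qmult_def algebra_simps)

lemma qmult_qcnj: "qmult x (qcnj x) = qnorm2 x *\<^sub>R e1" "qmult (qcnj x) x = qnorm2 x *\<^sub>R e1"
  by (simp_all add: qcnj_def qmult_def qnorm2_def power2_eq_square algebra_simps axis_eq_quat)

lemma qmult_one [simp]: "qmult e1 x = x" "qmult x e1 = x"
  by (simp_all add: qmult_def vec4_eq_iff axis_eq_quat)

lemma qmult_scaleR: "qmult x (r *\<^sub>R y) = r *\<^sub>R qmult x y" "qmult (r *\<^sub>R x) y = r *\<^sub>R qmult x y"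
  by (simp_all add: qmult_def vec4_eq_iff algebra_simps)

text \<open>The pure quaternions (\<open>x$1 = 0\<close>) model \<open>\<real>\<^sup>3\<close>; for a unit quaternion \<open>u\<close>,
  \<open>qrot u\<close> restricts to a rotation of them.\<close>
definition qrot :: "real^4 \<Rightarrow> real^4 \<Rightarrow> real^4" where
  "qrot u x = qmult (qmult u x) (qcnj u)"

lemma linear_qrot: "linear (qrot u)"
  by (rule linearI) (simp_all add: qrot_def qmult_def qcnj_def vec4_eq_iff algebra_simps)

lemma qrot_qmult: "qrot (qmult a b) x = qrot a (qrot b x)"
  unfolding qrot_def by (simp add: qcnj_qmult qmult_assoc)

lemma qrot_scaleR_left: "qrot (c *\<^sub>R u) x = c^2 *\<^sub>R qrot u x"
  unfolding qrot_def by (simp add: qmult_def qcnj_def vec4_eq_iff power2_eq_square algebra_simps)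

lemma inner_qrot: "inner (qrot u x) (qrot u y) = (qnorm2 u)^2 * inner x y"
  unfolding qrot_def
  by (simp add: inner_vec4 qmult_def qcnj_def qnorm2_def power2_eq_square algebra_simps)

lemma qrot_nth_1: "qrot u x $ 1 = qnorm2 u * x$1"
  unfolding qrot_def by (simp add: qmult_def qcnj_def qnorm2_def power2_eq_square algebra_simps)

lemma qrot_e1: "qrot u e1 = qnorm2 u *\<^sub>R e1"
  unfolding qrot_def by (simp add: qmult_qcnj)

lemma qrot_one: "qrot e1 x = x"
  by (simp add: qrot_def qcnj_def axis_eq_quat qmult_def vec4_eq_iff)

lemma qrot_qcnj_qrot: "norm u = 1 \<Longrightarrow> qrot (qcnj u) (qrot u x) = x"
  by (simp add: qrot_qmult[symmetric] qmult_qcnj qrot_scaleR_left qrot_one qnorm2_eq_norm)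

lemma qrot_qrot_qcnj: "norm u = 1 \<Longrightarrow> qrot u (qrot (qcnj u) x) = x"
  by (simp add: qrot_qmult[symmetric] qmult_qcnj qrot_scaleR_left qrot_one qnorm2_eq_norm)

lemma norm_qcnj: "norm (qcnj u) = norm u"
  by (simp add: norm_eq_sqrt_inner qnorm2_eq_inner[symmetric] qnorm2_qcnj)

lemma norm_qmult: "norm (qmult u v) = norm u * norm v"
  by (simp add: norm_eq_sqrt_inner qnorm2_eq_inner[symmetric] qnorm2_qmult real_sqrt_mult)

lemma inner_qrot_unit: "norm u = 1 \<Longrightarrow> inner (qrot u x) (qrot u y) = inner x y"
  by (simp add: inner_qrot qnorm2_eq_norm)

lemma norm_qrot_unit: "norm u = 1 \<Longrightarrow> norm (qrot u x) = norm x"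
  by (simp add: norm_eq_sqrt_inner inner_qrot_unit)

lemma qrot_unit_e1: "norm u = 1 \<Longrightarrow> qrot u e1 = e1"
  by (simp add: qrot_e1 qnorm2_eq_norm)

lemma qrot_pure: "x$1 = 0 \<Longrightarrow> qrot u x $ 1 = 0"
  by (simp add: qrot_nth_1)

lemma qrot_pure_pure:
  assumes "a$1 = 0" "c$1 = 0"
  shows "qrot c a = (2 * inner a c) *\<^sub>R c - qnorm2 c *\<^sub>R a"
  unfolding vec4_eq_iff using assms
  by (simp add: qrot_def qmult_def qcnj_def qnorm2_def inner_vec4 power2_eq_square algebra_simps axis_eq_quat)

lemma qrot_antipodal:
  assumes "a$1 = 0" "c$1 = 0" "norm c = 1" "inner a c = 0"
  shows "qrot c a = - a" "qrot c c = c"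
  using qrot_pure_pure[OF assms(1,2)] qrot_pure_pure[OF assms(2,2)] assms(3,4)
  by (simp_all add: qnorm2_eq_inner power2_norm_eq_inner[symmetric] scaleR_2)

lemma qmult_pure_commute:
  assumes "a$1 = 0" "b$1 = 0" "c$1 = 0"
  shows "qmult (qmult a b) c = qmult c (qmult a b) + (2 * inner a c) *\<^sub>R b - (2 * inner b c) *\<^sub>R a"
  unfolding vec4_eq_iff using assms by (simp add: qmult_def inner_vec4 algebra_simps)

lemma qnorm2_one_minus_qmult:
  assumes "a$1 = 0" "b$1 = 0"
  shows "qnorm2 (e1 - qmult b a) = 1 + 2 * inner a b + qnorm2 a * qnorm2 b"
  using assms by (simp add: qmult_def qnorm2_def inner_vec4 power2_eq_square algebra_simps axis_eq_quat)

lemma qrot_one_minus_qmult: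
  assumes "a$1 = 0" "b$1 = 0"
  shows "qrot (e1 - qmult b a) a
    = (2 * qnorm2 a * inner a b + 2 * qnorm2 a) *\<^sub>R b + (1 - qnorm2 a * qnorm2 b) *\<^sub>R a"
  unfolding vec4_eq_iff using assms
  by (simp add: qrot_def qmult_def qcnj_def qnorm2_def inner_vec4 power2_eq_square algebra_simps axis_eq_quat)

text \<open>For pure unit quaternions \<open>a \<noteq> -b\<close>, the quaternion \<open>1 - b a = 1 + a\<bullet>b + a\<times>b\<close> is, up to
  scale, the rotation about \<open>a \<times> b\<close> taking \<open>a\<close> to \<open>b\<close>.\<close>
lemma exists_qrot_non_antipodal:
  assumes pa: "a$1 = 0" and pb: "b$1 = 0" and na: "norm a = 1" and nb: "norm b = 1"
    and ab: "inner a b \<noteq> -1"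
  obtains u where "norm u = 1" "qrot u a = b"
    "\<And>c. c$1 = 0 \<Longrightarrow> inner a c = 0 \<Longrightarrow> inner b c = 0 \<Longrightarrow> qrot u c = c"
proof -
  define u0 where "u0 = e1 - qmult b a"
  have n0: "qnorm2 u0 = 2 + 2 * inner a b"
    using qnorm2_one_minus_qmult[OF pa pb] na nb by (simp add: u0_def qnorm2_eq_norm)
  have pos: "qnorm2 u0 > 0" using n0 ab qnorm2_nonneg[of u0] by simp
  have rot_a: "qrot u0 a = qnorm2 u0 *\<^sub>R b"
    using qrot_one_minus_qmult[OF pa pb] na nb n0 by (simp add: u0_def qnorm2_eq_norm algebra_simps)
  have rot_c: "qrot u0 c = qnorm2 u0 *\<^sub>R c"
    if "c$1 = 0" "inner a c = 0" "inner b c = 0" for c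
  proof -
    have "qmult u0 c = qmult c u0"
      using qmult_pure_commute[OF pb pa that(1)] that(2,3)
      by (simp add: u0_def qmult_def vec4_eq_iff inner_commute algebra_simps axis_eq_quat)
    then have "qrot u0 c = qmult c (qmult u0 (qcnj u0))"
      by (simp add: qrot_def qmult_assoc)
    then show ?thesis by (simp add: qmult_qcnj qmult_scaleR)
  qed
  define u where "u = (1 / sqrt (qnorm2 u0)) *\<^sub>R u0"
  have sq: "(1 / sqrt (qnorm2 u0))^2 = 1 / qnorm2 u0"
    using pos by (simp add: power_divide)
  show ?thesis
  proof
    show "norm u = 1"
      unfolding qnorm2_eq_1_iff[symmetric] u_def qnorm2_scaleR sq using pos by simp
    show "qrot u a = b"
      unfolding u_def qrot_scaleR_left sq rot_a using pos by simp
    show "qrot u c = c" if "c$1 = 0" "inner a c = 0" "inner b c = 0" for c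
      unfolding u_def qrot_scaleR_left sq rot_c[OF that] using pos by simp
  qed
qed

lemma inner_eq_neg1_imp_eq_neg:
  fixes a b :: "'a::real_inner"
  assumes "norm a = 1" "norm b = 1" "inner a b = -1"
  shows "b = - a"
proof -
  have "inner (a + b) (a + b) = (norm a)^2 + (norm b)^2 + 2 * inner a b"
    by (simp add: inner_add_left inner_add_right inner_commute power2_norm_eq_inner)
  then have "a + b = 0" using assms by simp
  then show ?thesis by (simp add: eq_neg_iff_add_eq_0 add.commute)
qed

lemma exists_qrot_from_e2:
  assumes "b$1 = 0" "norm b = 1"
  obtains u where "norm u = 1" "qrot u e2 = b"
proof (cases "inner e2 b = -1")
  case True
  then have "b = - e2" using assms(2) by (auto intro: inner_eq_neg1_imp_eq_neg)
  moreover have "qrot e3 e2 = - e2"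
    by (rule qrot_antipodal) (auto simp: inner_axis_axis)
  ultimately show ?thesis using that[of e3] by simp
next
  case False
  have e2: "(e2::real^4)$1 = 0" "norm (e2::real^4) = 1" by auto
  show ?thesis
  proof (rule exists_qrot_non_antipodal[OF e2(1) assms(1) e2(2) assms(2) False])
    fix u assume "norm u = 1" "qrot u e2 = b"
    then show ?thesis by (rule that)
  qed
qed

lemma exists_qrot_fixing:
  assumes pa: "a$1 = 0" and pb: "b$1 = 0" and pc: "c$1 = 0"
    and na: "norm a = 1" and nb: "norm b = 1" and nc: "norm c = 1"
    and ca: "inner a c = 0" and cb: "inner b c = 0"
  obtains u where "norm u = 1" "qrot u a = b" "qrot u c = c"
proof (cases "inner a b = -1")
  case True
  then have "b = - a" using na nb by (auto intro: inner_eq_neg1_imp_eq_neg)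
  then show ?thesis using that[OF nc] qrot_antipodal[OF pa pc nc ca] by simp
next
  case False
  show ?thesis
  proof (rule exists_qrot_non_antipodal[OF pa pb na nb False])
    fix u assume "norm u = 1" "qrot u a = b"
      "\<And>c. c$1 = 0 \<Longrightarrow> inner a c = 0 \<Longrightarrow> inner b c = 0 \<Longrightarrow> qrot u c = c"
    then show ?thesis using that pc ca cb by blast
  qed
qed

lemma exists_qrot_frame:
  assumes p1: "f1$1 = 0" and p2: "f2$1 = 0" and n1: "norm f1 = 1" and n2: "norm f2 = 1"
    and o12: "inner f1 f2 = 0"
  obtains u where "norm u = 1" "qrot u e2 = f1" "qrot u e3 = f2"
proof -
  obtain u1 where u1: "norm u1 = 1" "qrot u1 e2 = f1"
    using exists_qrot_from_e2[OF p1 n1] by blast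
  define g where "g = qrot u1 e3"
  have pg: "g$1 = 0" unfolding g_def by (rule qrot_pure) simp
  have ng: "norm g = 1" unfolding g_def using u1 by (simp add: norm_qrot_unit)
  have gf1: "inner f1 g = 0"
    unfolding g_def u1(2)[symmetric] inner_qrot_unit[OF u1(1)] by (simp add: inner_axis_axis)
  obtain u2 where u2: "norm u2 = 1" "qrot u2 g = f2" "qrot u2 f1 = f1"
    using exists_qrot_fixing[OF pg p2 p1 ng n2 n1] gf1 o12 by (metis inner_commute)
  show ?thesis
  proof
    show "norm (qmult u2 u1) = 1" by (simp add: norm_qmult u1 u2)
    show "qrot (qmult u2 u1) e2 = f1" unfolding qrot_qmult u1(2) u2(3) ..
    show "qrot (qmult u2 u1) e3 = f2" unfolding qrot_qmult g_def[symmetric] u2(2) ..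
  qed
qed

section \<open>Singular value decomposition by rotations\<close>

lemma inner_eq_at_maximizer:
  fixes N :: "'a::real_inner \<Rightarrow> 'b::real_inner"
  assumes lin: "linear N" and P: "subspace P" and fP: "f \<in> P" and yP: "y \<in> P"
    and bound: "\<And>x. x \<in> P \<Longrightarrow> inner (N x) (N x) \<le> lam * inner x x"
    and eq: "inner (N f) (N f) = lam * inner f f"
  shows "inner (N f) (N y) = lam * inner f y"
proof (rule ccontr)
  define d where "d = inner (N f) (N y) - lam * inner f y"
  define e where "e = inner (N y) (N y) - lam * inner y y"
  assume "inner (N f) (N y) \<noteq> lam * inner f y"
  then have "d \<noteq> 0" unfolding d_def by simp
  have quadratic: "2 * t * d + t^2 * e \<le> 0" for t
  proof -
    have "f + t *\<^sub>R y \<in> P" using P fP yP by (simp add: subspace_add subspace_scale)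
    then have "inner (N (f + t *\<^sub>R y)) (N (f + t *\<^sub>R y)) \<le> lam * inner (f + t *\<^sub>R y) (f + t *\<^sub>R y)"
      by (rule bound)
    then show ?thesis unfolding d_def e_def using eq lin
      by (simp add: linear_add linear_scale inner_add_left inner_add_right inner_commute
          power2_eq_square algebra_simps)
  qed
  \<comment> \<open>take \<open>t = d / k\<close> with \<open>k = |e| + 1\<close>: the quadratic becomes \<open>d\<^sup>2 (2k + e) / k\<^sup>2 > 0\<close>\<close>
  define k where "k = \<bar>e\<bar> + 1"
  have k: "k > 0" "2 * k + e > 0" unfolding k_def by (simp_all add: abs_if)
  have "(2 * (d / k) * d + (d / k)^2 * e) * k^2 = d^2 * (2 * k + e)"
    using k by (simp add: field_simps power2_eq_square)
  moreover have "(2 * (d / k) * d + (d / k)^2 * e) * k^2 \<le> 0"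
    using quadratic[of "d / k"] by (simp add: mult_nonpos_nonneg)
  ultimately show False using \<open>d \<noteq> 0\<close> k by (simp add: mult_le_0_iff)
qed

lemma exists_norm_maximizer:
  fixes N :: "'a::euclidean_space \<Rightarrow> 'b::real_inner"
  assumes lin: "linear N" and P: "subspace P" and x0: "x0 \<in> P" "x0 \<noteq> 0"
  obtains f where "f \<in> P" "norm f = 1"
    "\<And>y. y \<in> P \<Longrightarrow> norm y = 1 \<Longrightarrow> norm (N y) \<le> norm (N f)"
    "\<And>y. y \<in> P \<Longrightarrow> inner (N f) (N y) = (norm (N f))^2 * inner f y"
proof -
  have "compact (sphere 0 1 \<inter> P)"
    using P by (intro compact_Int_closed closed_subspace) simp_all
  moreover have "(1 / norm x0) *\<^sub>R x0 \<in> sphere 0 1 \<inter> P"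
    using x0 P by (simp add: subspace_scale)
  then have "sphere 0 1 \<inter> P \<noteq> {}" by blast
  moreover have "continuous_on (sphere 0 1 \<inter> P) (\<lambda>x. norm (N x))"
    using lin by (intro continuous_intros linear_continuous_on) (simp add: linear_conv_bounded_linear)
  ultimately obtain f where "f \<in> sphere 0 1 \<inter> P" "\<forall>y\<in>sphere 0 1 \<inter> P. norm (N y) \<le> norm (N f)"
    by (metis continuous_attains_sup)
  then have f: "f \<in> P" "norm f = 1"
    and max: "\<And>y. y \<in> P \<Longrightarrow> norm y = 1 \<Longrightarrow> norm (N y) \<le> norm (N f)"
    by auto
  have bound: "norm (N x) \<le> norm (N f) * norm x" if "x \<in> P" for x
  proof (cases "x = 0")
    case True
    then show ?thesis using lin by (simp add: linear_0)
  next
    case False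
    have "norm (N ((1 / norm x) *\<^sub>R x)) \<le> norm (N f)"
      using False that P by (intro max) (simp_all add: subspace_scale)
    then show ?thesis using False lin by (simp add: linear_scale field_simps)
  qed
  have "inner (N f) (N y) = (norm (N f))^2 * inner f y" if "y \<in> P" for y
  proof (rule inner_eq_at_maximizer[OF lin P f(1) that])
    show "inner (N x) (N x) \<le> (norm (N f))^2 * inner x x" if "x \<in> P" for x
      using mult_mono[OF bound[OF that] bound[OF that]]
      by (simp add: power2_norm_eq_inner[symmetric] power_mult_distrib power2_eq_square mult_ac)
    show "inner (N f) (N f) = (norm (N f))^2 * inner f f"
      using f(2) by (simp add: power2_norm_eq_inner[symmetric])
  qed
  then show ?thesis using that f max by blast
qed

lemma exists_qrot_orthogonal_images:
  fixes N :: "real^4 \<Rightarrow> real^4"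
  assumes lin: "linear N" and inj: "\<And>x. x$1 = 0 \<Longrightarrow> N x = 0 \<Longrightarrow> x = 0"
  obtains u where "norm u = 1"
    "inner (N (qrot u e2)) (N (qrot u e3)) = 0" "inner (N (qrot u e2)) (N (qrot u e4)) = 0"
    "inner (N (qrot u e3)) (N (qrot u e4)) = 0"
    "norm (N (qrot u e3)) \<le> norm (N (qrot u e2))" "norm (N (qrot u e4)) \<le> norm (N (qrot u e3))"
    "N (qrot u e4) \<noteq> 0"
proof -
  define P1 where "P1 = {x::real^4. x$1 = 0}"
  have P1: "subspace P1" unfolding P1_def by (auto simp: subspace_def)
  have "e2 \<in> P1" "e2 \<noteq> 0" unfolding P1_def by simp_all
  then obtain f1 where "f1 \<in> P1" "norm f1 = 1"
    and max1: "\<And>y. y \<in> P1 \<Longrightarrow> norm y = 1 \<Longrightarrow> norm (N y) \<le> norm (N f1)"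
    and crit1: "\<And>y. y \<in> P1 \<Longrightarrow> inner (N f1) (N y) = (norm (N f1))^2 * inner f1 y"
    using exists_norm_maximizer[OF lin P1] by blast
  then have f1: "f1$1 = 0" "norm f1 = 1" unfolding P1_def by simp_all
  define P2 where "P2 = {x::real^4. x$1 = 0 \<and> inner f1 x = 0}"
  have P2: "subspace P2" unfolding P2_def by (auto simp: subspace_def inner_add_right)
  obtain u1 where u1: "norm u1 = 1" "qrot u1 e2 = f1"
    using exists_qrot_from_e2[OF f1] by blast
  have "inner f1 (qrot u1 e3) = 0"
    unfolding u1(2)[symmetric] inner_qrot_unit[OF u1(1)] by (simp add: inner_axis_axis)
  then have "qrot u1 e3 \<in> P2" "qrot u1 e3 \<noteq> 0"
    using norm_qrot_unit[OF u1(1), of e3] unfolding P2_def by (auto simp: qrot_pure)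
  then obtain f2 where "f2 \<in> P2" "norm f2 = 1"
    and max2: "\<And>y. y \<in> P2 \<Longrightarrow> norm y = 1 \<Longrightarrow> norm (N y) \<le> norm (N f2)"
    and crit2: "\<And>y. y \<in> P2 \<Longrightarrow> inner (N f2) (N y) = (norm (N f2))^2 * inner f2 y"
    using exists_norm_maximizer[OF lin P2] by blast
  then have f2: "f2$1 = 0" "inner f1 f2 = 0" "norm f2 = 1" unfolding P2_def by simp_all
  have N12: "inner (N f1) (N f2) = 0" using crit1[of f2] f2 unfolding P1_def by simp
  obtain u where u: "norm u = 1" "qrot u e2 = f1" "qrot u e3 = f2"
    using exists_qrot_frame[OF f1(1) f2(1) f1(2) f2(3) f2(2)] by blast
  define f3 where "f3 = qrot u e4"
  have f3: "f3$1 = 0" "norm f3 = 1" "inner f1 f3 = 0" "inner f2 f3 = 0"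
    unfolding f3_def u(2,3)[symmetric] inner_qrot_unit[OF u(1)]
    by (simp_all add: qrot_pure norm_qrot_unit u(1) inner_axis_axis)
  have "inner (N f2) (N f3) = 0" using crit2[of f3] f3 unfolding P2_def by simp
  moreover have "inner (N f1) (N f3) = 0" using crit1[of f3] f3 unfolding P1_def by simp
  moreover have "norm (N f2) \<le> norm (N f1)" using max1[of f2] f2 unfolding P1_def by simp
  moreover have "norm (N f3) \<le> norm (N f2)" using max2[of f3] f3 unfolding P2_def by simp
  moreover have "N f3 \<noteq> 0" using inj[OF f3(1)] f3(2) by auto
  ultimately show ?thesis using that u N12 unfolding f3_def by auto
qed

lemma exists_qrot_to_axes:
  assumes p: "h1$1 = 0" "h2$1 = 0" "h3$1 = 0" and nz: "h1 \<noteq> 0" "h2 \<noteq> 0"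
    and o: "inner h1 h2 = 0" "inner h1 h3 = 0" "inner h2 h3 = 0"
  obtains v a where "norm v = 1" "qrot v h1 = norm h1 *\<^sub>R e2" "qrot v h2 = norm h2 *\<^sub>R e3"
    "qrot v h3 = a *\<^sub>R e4" "\<bar>a\<bar> = norm h3"
proof -
  define g1 where "g1 = (1 / norm h1) *\<^sub>R h1"
  define g2 where "g2 = (1 / norm h2) *\<^sub>R h2"
  have "g1$1 = 0" "g2$1 = 0" "norm g1 = 1" "norm g2 = 1" "inner g1 g2 = 0"
    unfolding g1_def g2_def using p nz o by simp_all
  then obtain w where w: "norm w = 1" "qrot w e2 = g1" "qrot w e3 = g2"
    by (rule exists_qrot_frame)
  define v where "v = qcnj w"
  have v: "norm v = 1" unfolding v_def using w by (simp add: norm_qcnj)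
  have wv: "qrot w (qrot v x) = x" for x unfolding v_def by (rule qrot_qrot_qcnj[OF w(1)])
  have "qrot v g1 = e2" "qrot v g2 = e3"
    unfolding v_def w(2,3)[symmetric] by (simp_all add: qrot_qcnj_qrot w(1))
  moreover have "qrot v h1 = norm h1 *\<^sub>R qrot v g1" "qrot v h2 = norm h2 *\<^sub>R qrot v g2"
    using nz by (simp_all add: g1_def g2_def linear_scale[OF linear_qrot])
  ultimately have r12: "qrot v h1 = norm h1 *\<^sub>R e2" "qrot v h2 = norm h2 *\<^sub>R e3"
    by simp_all
  define y where "y = qrot v h3"
  have "inner e2 y = inner g1 h3" "inner e3 y = inner g2 h3"
    unfolding y_def w(2,3)[symmetric] by (metis inner_qrot_unit[OF w(1)] wv)+
  then have "y$2 = 0" "y$3 = 0"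
    using o nz unfolding g1_def g2_def by (simp_all add: inner_axis')
  moreover have "y$1 = 0" unfolding y_def by (rule qrot_pure[OF p(3)])
  ultimately have y: "y = y$4 *\<^sub>R e4" by (simp add: vec4_eq_iff axis_eq_quat)
  have "\<bar>y$4\<bar> = norm h3"
    using norm_qrot_unit[OF v, of h3] arg_cong[OF y, of norm] by (simp add: y_def)
  then show ?thesis using that[OF v r12] y unfolding y_def by blast
qed

lemma unital_quat_map_svd:
  fixes A :: "real^4 \<Rightarrow> real^4"
  assumes lin: "linear A" and inj: "inj A" and unital: "A e1 = e1"
  obtains u v a1 a2 a3 b1 b2 b3 where "norm u = 1" "norm v = 1"
    "qrot v (A (qrot u e2)) = b1 *\<^sub>R e1 + a1 *\<^sub>R e2"
    "qrot v (A (qrot u e3)) = b2 *\<^sub>R e1 + a2 *\<^sub>R e3"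
    "qrot v (A (qrot u e4)) = b3 *\<^sub>R e1 + a3 *\<^sub>R e4"
    "a1 \<ge> a2" "a2 \<ge> \<bar>a3\<bar>" "\<bar>a3\<bar> > 0"
proof -
  define N where "N x = A x - A x $ 1 *\<^sub>R e1" for x
  have linN: "linear N" unfolding N_def using lin
    by (intro linearI) (simp_all add: linear_add linear_scale algebra_simps)
  have pureN: "N x $ 1 = 0" for x unfolding N_def by simp
  have injN: "x = 0" if "x$1 = 0" "N x = 0" for x
  proof -
    define c where "c = A x $ 1"
    have "A x = c *\<^sub>R e1" using that(2) by (simp add: N_def c_def)
    also have "\<dots> = A (c *\<^sub>R e1)" using lin unital by (simp add: linear_scale)
    finally have "x = c *\<^sub>R e1" by (rule injD[OF inj])
    then show ?thesis using that(1) by simp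
  qed
  obtain u where u: "norm u = 1"
    and o: "inner (N (qrot u e2)) (N (qrot u e3)) = 0" "inner (N (qrot u e2)) (N (qrot u e4)) = 0"
      "inner (N (qrot u e3)) (N (qrot u e4)) = 0"
    and le: "norm (N (qrot u e3)) \<le> norm (N (qrot u e2))" "norm (N (qrot u e4)) \<le> norm (N (qrot u e3))"
    and nz: "N (qrot u e4) \<noteq> 0"
    using exists_qrot_orthogonal_images[OF linN injN] by blast
  have "N (qrot u e3) \<noteq> 0" "N (qrot u e2) \<noteq> 0" using le nz by auto
  then obtain v a3 where v: "norm v = 1"
    and r: "qrot v (N (qrot u e2)) = norm (N (qrot u e2)) *\<^sub>R e2"
      "qrot v (N (qrot u e3)) = norm (N (qrot u e3)) *\<^sub>R e3"
      "qrot v (N (qrot u e4)) = a3 *\<^sub>R e4"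
    and a3: "\<bar>a3\<bar> = norm (N (qrot u e4))"
    using exists_qrot_to_axes[OF pureN pureN pureN _ _ o] by blast
  have A_split: "qrot v (A x) = A x $ 1 *\<^sub>R e1 + qrot v (N x)" for x
  proof -
    have "qrot v (A x) = qrot v (N x + A x $ 1 *\<^sub>R e1)" unfolding N_def by simp
    then show ?thesis
      using qrot_unit_e1[OF v] by (simp add: linear_add[OF linear_qrot] linear_scale[OF linear_qrot])
  qed
  show ?thesis
    by (rule that[OF u v]) (use le nz a3 in \<open>auto simp: A_split r\<close>)
qed

section \<open>Linear algebra\<close>

lemma mat2_eq_iff:
  "(A::'a^2^2) = B \<longleftrightarrow> A$1$1 = B$1$1 \<and> A$1$2 = B$1$2 \<and> A$2$1 = B$2$1 \<and> A$2$2 = B$2$2"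
  by (auto simp: vec_eq_iff forall_2)

lemma matrix_matrix_mult_2x2 [simp]:
  "((A::'a::semiring_1^2^2) ** B) $ i $ j = A$i$1 * B$1$j + A$i$2 * B$2$j"
  by (simp add: matrix_matrix_mult_def sum_2)

lemma matrix_inv_eqI:
  fixes A B :: "'a::field^'n^'n"
  assumes "A ** B = mat 1"
  shows "matrix_inv A = B"
proof -
  have "B ** A = mat 1" using assms matrix_left_right_inverse by blast
  then have "A ** matrix_inv A = mat 1 \<and> matrix_inv A ** A = mat 1"
    unfolding matrix_inv_def using assms by (rule someI[of _ B, OF conjI[rotated]])
  then have "matrix_inv A = (B ** A) ** matrix_inv A" using \<open>B ** A = mat 1\<close> by simp
  also have "\<dots> = B" using \<open>A ** matrix_inv A = mat 1 \<and> _\<close> by (simp flip: matrix_mul_assoc)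
  finally show ?thesis .
qed

lemma linear_matrix_mult_left: "linear (\<lambda>X. (A::'a::real_algebra_1^'n^'m) ** X)"
  by (rule linearI) (simp_all add: matrix_add_ldistrib matrix_scalar_ac scalar_matrix_assoc)

lemma linear_matrix_mult_right: "linear (\<lambda>X. X ** (A::'a::real_algebra_1^'n^'m))"
  by (rule linearI)
    (simp_all add: matrix_matrix_mult_def vec_eq_iff distrib_right sum.distrib scaleR_sum_right)

lemma bij_matrix_mult_left:
  fixes M M' :: "'a::field^'n^'n"
  assumes MM': "M ** M' = mat 1" and T: "bij T"
  shows "bij (\<lambda>X. M ** T X)"
proof (rule bijI)
  have M'M: "M' ** M = mat 1" using MM' matrix_left_right_inverse by blast
  show "inj (\<lambda>X. M ** T X)"
  proof (rule injI)
    fix X Y assume "M ** T X = M ** T Y"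
    then have "(M' ** M) ** T X = (M' ** M) ** T Y" by (simp flip: matrix_mul_assoc)
    then show "X = Y" using M'M T by (simp add: bij_def inj_eq)
  qed
  show "surj (\<lambda>X. M ** T X)"
  proof (rule surjI)
    fix Y show "M ** T (inv T (M' ** Y)) = Y"
      by (simp add: surj_f_inv_f[OF bij_is_surj[OF T]] matrix_mul_assoc MM')
  qed
qed

lemma linear_matrix_conj:
  fixes L :: "'a::real_algebra_1^'n^'n \<Rightarrow> 'a^'n^'n"
  assumes "linear L"
  shows "linear (\<lambda>X. V ** L (U ** X ** U') ** V')"
  using linear_compose[OF linear_compose[OF linear_compose[OF linear_compose[OF
      linear_matrix_mult_left linear_matrix_mult_right] assms] linear_matrix_mult_left] linear_matrix_mult_right]
  by (simp add: o_def matrix_mul_assoc)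

lemma mult_closed_image_subset_iff:
  fixes M M' :: "'a::field^'n^'n"
  assumes mult: "\<And>X Y. X \<in> S \<Longrightarrow> Y \<in> S \<Longrightarrow> X ** Y \<in> S"
    and M: "M \<in> S" "M' \<in> S" "M ** M' = mat 1"
  shows "T ` S \<subseteq> S \<longleftrightarrow> (\<lambda>X. M' ** T X) ` S \<subseteq> S"
proof
  assume "T ` S \<subseteq> S"
  then show "(\<lambda>X. M' ** T X) ` S \<subseteq> S" using mult M by blast
next
  assume L: "(\<lambda>X. M' ** T X) ` S \<subseteq> S"
  have "T X = M ** (M' ** T X)" for X using M(3) by (simp add: matrix_mul_assoc)
  then show "T ` S \<subseteq> S" using L mult M(1) by (metis image_subset_iff)
qed

lemma linear_image_subset_scaled_iff:
  fixes T :: "'a::real_vector \<Rightarrow> 'a"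
  assumes "linear T"
  shows "T ` U \<subseteq> {r *\<^sub>R V | r V. V \<in> U} \<longleftrightarrow>
         T ` {r *\<^sub>R V | r V. V \<in> U} \<subseteq> {r *\<^sub>R V | r V. V \<in> U}"
proof
  assume h: "T ` U \<subseteq> {r *\<^sub>R V | r V. V \<in> U}"
  show "T ` {r *\<^sub>R V | r V. V \<in> U} \<subseteq> {r *\<^sub>R V | r V. V \<in> U}"
  proof clarify
    fix r V assume "V \<in> U"
    then obtain s W where "T V = s *\<^sub>R W" "W \<in> U" using h by blast
    then have "T (r *\<^sub>R V) = (r * s) *\<^sub>R W" using assms by (simp add: linear_scale)
    then show "\<exists>r' V'. T (r *\<^sub>R V) = r' *\<^sub>R V' \<and> V' \<in> U" using \<open>W \<in> U\<close> by blast
  qed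
next
  assume "T ` {r *\<^sub>R V | r V. V \<in> U} \<subseteq> {r *\<^sub>R V | r V. V \<in> U}"
  moreover have "U \<subseteq> {r *\<^sub>R V | r V. V \<in> U}" by (metis (mono_tags, lifting) mem_Collect_eq scaleR_one subsetI)
  ultimately show "T ` U \<subseteq> {r *\<^sub>R V | r V. V \<in> U}" by blast
qed

lemma subspace_subset_Un:
  assumes "subspace A" "subspace B" "subspace S" "S \<subseteq> A \<union> B"
  shows "S \<subseteq> A \<or> S \<subseteq> B"
proof (rule ccontr)
  assume "\<not> (S \<subseteq> A \<or> S \<subseteq> B)"
  then obtain x y where x: "x \<in> S" "x \<notin> A" and y: "y \<in> S" "y \<notin> B" by blast
  then have "x \<in> B" "y \<in> A" using assms(4) by blast+
  have "x + y \<in> A \<union> B" using x y assms(3,4) by (blast intro: subspace_add)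
  then show False
    using x y \<open>x \<in> B\<close> \<open>y \<in> A\<close> assms(1,2) subspace_diff[of A "x + y" y] subspace_diff[of B "x + y" x]
    by auto
qed

lemma linear_image_eq_of_complement:
  fixes T :: "'a::real_vector \<Rightarrow> 'a"
  assumes lin: "linear T" and surj: "surj T" and A: "subspace A" and B: "subspace B"
    and sum: "\<And>x. \<exists>a\<in>A. \<exists>b\<in>B. x = a + b" and disj: "A \<inter> B \<subseteq> {0}"
    and TA: "T ` A \<subseteq> A" and TB: "T ` B \<subseteq> B"
  shows "T ` A = A" "T ` B = B"
proof -
  have onto: "P \<subseteq> T ` P"
    if P: "subspace P" and TP: "T ` P \<subseteq> P" and TQ: "T ` Q \<subseteq> Q" and PQ: "P \<inter> Q \<subseteq> {0}"
      and PQ_sum: "\<And>x. \<exists>p\<in>P. \<exists>q\<in>Q. x = p + q" for P Q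
  proof
    fix y assume y: "y \<in> P"
    obtain x where "y = T x" using surj by (metis surjD)
    moreover obtain p q where pq: "p \<in> P" "q \<in> Q" "x = p + q" using PQ_sum by blast
    ultimately have Tq: "T q = y - T p" using lin by (simp add: linear_add)
    moreover have "T p \<in> P" "T q \<in> Q" using pq TP TQ by blast+
    ultimately have "T q \<in> P \<inter> Q" using y P by (simp add: subspace_diff)
    then have "y = T p" using Tq PQ by auto
    then show "y \<in> T ` P" using pq by blast
  qed
  show "T ` A = A" using onto[OF A TA TB disj sum] TA by blast
  have "\<exists>b\<in>B. \<exists>a\<in>A. x = b + a" for x using sum[of x] by (metis add.commute)
  then show "T ` B = B" using onto[OF B TB TA _] disj TB by blast
qed

lemma linear_pointwise_proportional:
  fixes A B :: "'a::real_vector \<Rightarrow> 'b::real_vector"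
  assumes linA: "linear A" and linB: "linear B" and injA: "inj A"
    and ex: "\<And>v. \<exists>t. B v = t *\<^sub>R A v"
  obtains c where "\<And>v. B v = c *\<^sub>R A v"
proof (cases "\<exists>v0::'a. v0 \<noteq> 0")
  case False
  then have trivial: "v = 0" for v :: 'a by blast
  have "B v = 0 *\<^sub>R A v" for v using linear_0[OF linB] trivial[of v] by simp
  then show ?thesis by (rule that)
next
  case True
  then obtain v0 :: 'a where v0: "v0 \<noteq> 0" by blast
  then have Av0: "A v0 \<noteq> 0" using injA linA by (metis linear_0 injD)
  obtain c where c: "B v0 = c *\<^sub>R A v0" using ex by blast
  have "B v = c *\<^sub>R A v" for v
  proof -
    obtain t where t: "B v = t *\<^sub>R A v" using ex by blast
    obtain s where s: "B (v + v0) = s *\<^sub>R A (v + v0)" using ex by blast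
    have key: "(t - s) *\<^sub>R A v = (s - c) *\<^sub>R A v0"
      using s t c linA linB by (simp add: linear_add algebra_simps)
    show ?thesis
    proof (cases "t = s")
      case True
      then have "s = c" using key Av0 by simp
      then show ?thesis using t True by simp
    next
      case False
      then have "A v = inverse (t - s) *\<^sub>R ((t - s) *\<^sub>R A v)" by simp
      also have "\<dots> = ((s - c) / (t - s)) *\<^sub>R A v0" unfolding key by (simp add: divide_inverse_commute)
      also have "\<dots> = A (((s - c) / (t - s)) *\<^sub>R v0)" using linA by (simp add: linear_scale)
      finally have "v = ((s - c) / (t - s)) *\<^sub>R v0" by (rule injD[OF injA])
      then show ?thesis using c linA linB by (simp add: linear_scale)
    qed
  qed
  then show ?thesis by (rule that)
qed

lemma linear_pointwise_parallel_imp_proportional: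
  fixes A B :: "'a::real_vector \<Rightarrow> 'b::real_vector"
  assumes linA: "linear A" and linB: "linear B" and injA: "inj A"
    and par: "\<And>v. \<exists>\<alpha> \<beta> q. A v = \<alpha> *\<^sub>R q \<and> B v = \<beta> *\<^sub>R q"
  obtains c where "\<And>v. B v = c *\<^sub>R A v"
proof -
  have "\<exists>t. B v = t *\<^sub>R A v" for v
  proof (cases "v = 0")
    case True
    then show ?thesis using linA linB by (simp add: linear_0)
  next
    case False
    obtain \<alpha> \<beta> q where h: "A v = \<alpha> *\<^sub>R q" "B v = \<beta> *\<^sub>R q" using par by blast
    have "A v \<noteq> 0" using False injA linA by (metis linear_0 injD)
    then have "B v = (\<beta> / \<alpha>) *\<^sub>R A v" using h by auto
    then show ?thesis by blast
  qed
  then show ?thesis using linear_pointwise_proportional[OF linA linB injA] that by blast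
qed

section \<open>Quaternions and unitaries in \<open>M\<^sub>2(\<complex>)\<close>\<close>

lemma csmult_nth [simp]: "csmult c A $ i $ j = c * A $ i $ j"
  by (simp add: csmult_def)

lemma cadj_nth [simp]: "cadj A $ i $ j = cnj (A $ j $ i)"
  by (simp add: cadj_def)

lemma csmult_mult: "csmult c A ** B = csmult c (A ** B)" "A ** csmult c B = csmult c (A ** B)"
  by (simp_all add: mat2_eq_iff algebra_simps)

lemma csmult_csmult [simp]: "csmult a (csmult b A) = csmult (a * b) A"
  by (simp add: mat2_eq_iff)

lemma csmult_add: "csmult c (A + B) = csmult c A + csmult c B" "csmult (a + b) A = csmult a A + csmult b A"
  by (simp_all add: mat2_eq_iff algebra_simps)

lemma csmult_1 [simp]: "csmult 1 A = A"
  by (simp add: mat2_eq_iff)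

lemma csmult_0 [simp]: "csmult 0 A = 0" "csmult c 0 = 0"
  by (simp_all add: mat2_eq_iff)

lemma csmult_cancel: "c \<noteq> 0 \<Longrightarrow> csmult c X = csmult c Y \<longleftrightarrow> X = Y"
  by (auto simp: mat2_eq_iff)

lemma scaleR_eq_csmult: "r *\<^sub>R A = csmult (of_real r) (A::complex^2^2)"
  by (simp only: mat2_eq_iff vector_scaleR_component csmult_nth) (simp add: scaleR_conv_of_real)

lemma cadj_csmult: "cadj (csmult c A) = csmult (cnj c) (cadj A)"
  by (simp add: mat2_eq_iff)

lemma cadj_mult: "cadj (A ** B) = cadj B ** cadj A"
  by (simp add: mat2_eq_iff algebra_simps)

lemma cadj_cadj [simp]: "cadj (cadj A) = A"
  by (simp add: mat2_eq_iff)

lemma cadj_mat1 [simp]: "cadj (mat 1) = (mat 1 :: complex^2^2)"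
  by (simp add: mat2_eq_iff mat_def)

lemma linear_csmult: "linear (csmult c)"
  by (rule linearI) (simp_all add: csmult_add scaleR_eq_csmult mult.commute)

lemma linear_csmult_left: "linear (\<lambda>c. csmult c A)"
  by (rule linearI) (simp_all add: csmult_add scaleR_eq_csmult scaleR_conv_of_real ac_simps)

lemma csmult_eq_scaleR_combination: "csmult z A = Re z *\<^sub>R A + Im z *\<^sub>R csmult \<i> A"
  by (simp add: mat2_eq_iff complex_eq_iff)

text \<open>Quaternions as complex \<open>2\<times>2\<close> matrices, with coordinates arranged so that the units
  \<open>i, j, k\<close> go to \<open>\<Sigma>\<^sub>1, \<Sigma>\<^sub>2, \<Sigma>\<^sub>3\<close>.\<close>
definition qmat :: "real^4 \<Rightarrow> complex^2^2" where
  "qmat x = vector [vector [Complex (x$1) (x$4), Complex (x$3) (x$2)],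
                    vector [Complex (-(x$3)) (x$2), Complex (x$1) (-(x$4))]]"

lemma qmat_nth [simp]:
  "qmat x $ 1 $ 1 = Complex (x$1) (x$4)" "qmat x $ 1 $ 2 = Complex (x$3) (x$2)"
  "qmat x $ 2 $ 1 = Complex (-(x$3)) (x$2)" "qmat x $ 2 $ 2 = Complex (x$1) (-(x$4))"
  by (simp_all add: qmat_def)

lemma linear_qmat: "linear qmat"
  by (rule linearI) (simp_all add: mat2_eq_iff complex_eq_iff)

lemma qmat_eq_iff: "qmat x = qmat y \<longleftrightarrow> x = y"
  by (auto simp: mat2_eq_iff complex_eq_iff vec4_eq_iff)

lemma qmat_add: "qmat (x + y) = qmat x + qmat y"
  by (rule linear_add[OF linear_qmat])

lemma qmat_scaleR: "qmat (r *\<^sub>R x) = r *\<^sub>R qmat x"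
  by (rule linear_scale[OF linear_qmat])

lemma qmat_eq_0_iff: "qmat x = 0 \<longleftrightarrow> x = 0"
  using qmat_eq_iff[of x 0] linear_0[OF linear_qmat] by simp

lemma qmat_mult: "qmat x ** qmat y = qmat (qmult x y)"
  by (simp add: mat2_eq_iff qmult_def complex_eq_iff algebra_simps)

lemma cadj_qmat: "cadj (qmat x) = qmat (qcnj x)"
  by (simp add: mat2_eq_iff qcnj_def complex_eq_iff)

lemma qmat_e1: "qmat e1 = mat 1"
  by (simp add: mat2_eq_iff axis_eq_quat mat_def complex_eq_iff)

lemma Sig_eq_qmat: "Sig 1 = qmat e2" "Sig 2 = qmat e3" "Sig 3 = qmat e4"
  by (simp_all add: mat2_eq_iff Sig_def axis_eq_quat complex_eq_iff)

lemma qmat_qrot: "qmat u ** qmat x ** cadj (qmat u) = qmat (qrot u x)"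
  by (simp add: cadj_qmat qmat_mult qrot_def)

lemma qmat_conj_csmult:
  "qmat u ** csmult c (qmat x) ** cadj (qmat u) = csmult c (qmat (qrot u x))"
  by (simp add: csmult_mult qmat_qrot)

lemma qmat_mult_qcnj: "qmat x ** cadj (qmat x) = of_real (qnorm2 x) *\<^sub>R mat 1"
  "cadj (qmat x) ** qmat x = of_real (qnorm2 x) *\<^sub>R mat 1"
  by (simp_all add: cadj_qmat qmat_mult qmult_qcnj qmat_scaleR qmat_e1)

lemma subspace_range_qmat: "subspace (range qmat)"
  by (rule linear_subspace_image[OF linear_qmat subspace_UNIV])

definition qre :: "complex^2^2 \<Rightarrow> real^4" where
  "qre X = quat ((Re (X$1$1) + Re (X$2$2)) / 2) ((Im (X$1$2) + Im (X$2$1)) / 2)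
                ((Re (X$1$2) - Re (X$2$1)) / 2) ((Im (X$1$1) - Im (X$2$2)) / 2)"

definition qim :: "complex^2^2 \<Rightarrow> real^4" where
  "qim X = quat ((Im (X$1$1) + Im (X$2$2)) / 2) (- (Re (X$1$2) + Re (X$2$1)) / 2)
                ((Im (X$1$2) - Im (X$2$1)) / 2) ((Re (X$2$2) - Re (X$1$1)) / 2)"

lemma qmat_qre_qim: "X = qmat (qre X) + csmult \<i> (qmat (qim X))"
  by (simp add: mat2_eq_iff complex_eq_iff qre_def qim_def field_simps)

lemma qre_qim_qmat [simp]:
  "qre (qmat a) = a" "qim (qmat a) = 0" "qre (csmult \<i> (qmat a)) = 0" "qim (csmult \<i> (qmat a)) = a"
  by (simp_all add: qre_def qim_def vec4_eq_iff)

lemma qre_qim_csmult_qmat [simp]: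
  "qre (csmult z (qmat a)) = Re z *\<^sub>R a" "qim (csmult z (qmat a)) = Im z *\<^sub>R a"
  by (simp_all add: qre_def qim_def vec4_eq_iff)

lemma linear_qre: "linear qre" and linear_qim: "linear qim"
  by (rule linearI; simp add: qre_def qim_def vec4_eq_iff field_simps)+

lemma qmat_qre:
  assumes "X$2$1 = - cnj (X$1$2)" "X$2$2 = cnj (X$1$1)"
  shows "qmat (qre X) = X"
  using assms by (simp add: mat2_eq_iff complex_eq_iff qre_def)

lemma csmult_qmat_real:
  assumes "Im w = 0"
  shows "csmult w (qmat a) = qmat (Re w *\<^sub>R a)"
proof -
  have "complex_of_real (Re w) = w" using assms by (simp add: complex_eq_iff)
  then show ?thesis by (simp add: qmat_scaleR scaleR_eq_csmult)
qed

lemma Im_cnj_mult_eq_0_imp_real_multiple: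
  assumes "w \<noteq> 0" "Im (cnj w * z) = 0"
  shows "z = of_real (Re (z / w)) * w"
proof -
  have "Im (z / w) = 0" using assms(2) by (simp add: Im_divide algebra_simps)
  then have "z / w = of_real (Re (z / w))" by (simp add: complex_eq_iff)
  then show ?thesis using assms(1) by (metis nonzero_divide_eq_eq)
qed

text \<open>The hypothesis \<open>Im (cnj z\<^sub>1 * z\<^sub>2) \<noteq> 0\<close> says that \<open>z\<^sub>1, z\<^sub>2\<close> are linearly
  independent over \<open>\<real>\<close>.\<close>
lemma csmult_qmat_sum_parallel:
  assumes D: "Im (cnj z1 * z2) \<noteq> 0"
    and eq: "csmult z1 (qmat q1) + csmult z2 (qmat q2) = csmult z (qmat q)"
  obtains \<alpha> \<beta> where "q1 = \<alpha> *\<^sub>R q" "q2 = \<beta> *\<^sub>R q"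
proof -
  have E1: "Re z1 *\<^sub>R q1 + Re z2 *\<^sub>R q2 = Re z *\<^sub>R q"
    using arg_cong[OF eq, of qre] by (simp add: linear_add[OF linear_qre])
  have E2: "Im z1 *\<^sub>R q1 + Im z2 *\<^sub>R q2 = Im z *\<^sub>R q"
    using arg_cong[OF eq, of qim] by (simp add: linear_add[OF linear_qim])
  define d where "d = Re z1 * Im z2 - Im z1 * Re z2"
  have d: "d \<noteq> 0" using D unfolding d_def by (simp add: algebra_simps)
  have "d *\<^sub>R q1 = Im z2 *\<^sub>R (Re z1 *\<^sub>R q1 + Re z2 *\<^sub>R q2) - Re z2 *\<^sub>R (Im z1 *\<^sub>R q1 + Im z2 *\<^sub>R q2)"
    "d *\<^sub>R q2 = Re z1 *\<^sub>R (Im z1 *\<^sub>R q1 + Im z2 *\<^sub>R q2) - Im z1 *\<^sub>R (Re z1 *\<^sub>R q1 + Re z2 *\<^sub>R q2)"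
    unfolding d_def by (simp_all add: algebra_simps)
  then have k: "d *\<^sub>R q1 = (Im z2 * Re z - Re z2 * Im z) *\<^sub>R q"
    "d *\<^sub>R q2 = (Re z1 * Im z - Im z1 * Re z) *\<^sub>R q"
    unfolding E1 E2 by (simp_all add: algebra_simps)
  have "q1 = inverse d *\<^sub>R (d *\<^sub>R q1)" "q2 = inverse d *\<^sub>R (d *\<^sub>R q2)" using d by simp_all
  then have "q1 = (inverse d * (Im z2 * Re z - Re z2 * Im z)) *\<^sub>R q"
    "q2 = (inverse d * (Re z1 * Im z - Im z1 * Re z)) *\<^sub>R q"
    unfolding k by simp_all
  then show ?thesis by (rule that)
qed

lemma linear_quat_expand:
  assumes "linear L"
  shows "L (csmult c (qmat x)) = x$1 *\<^sub>R L (csmult c (qmat e1)) + x$2 *\<^sub>R L (csmult c (qmat e2))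
    + x$3 *\<^sub>R L (csmult c (qmat e3)) + x$4 *\<^sub>R L (csmult c (qmat e4))"
proof -
  have "csmult c (qmat x) = x$1 *\<^sub>R csmult c (qmat e1) + x$2 *\<^sub>R csmult c (qmat e2)
      + x$3 *\<^sub>R csmult c (qmat e3) + x$4 *\<^sub>R csmult c (qmat e4)"
    by (subst vec4_expand) (simp add: qmat_add qmat_scaleR csmult_add scaleR_eq_csmult mult.commute)
  then show ?thesis by (simp add: linear_add[OF assms] linear_scale[OF assms])
qed

lemma cnj_mult_self_eq_1_iff: "cnj z * z = 1 \<longleftrightarrow> cmod z = 1"
proof -
  have "cnj z * z = of_real ((cmod z)^2)" by (metis complex_norm_square mult.commute)
  then show ?thesis using norm_ge_zero[of z]
    by (simp only: of_real_eq_1_iff power2_eq_1_iff) (auto simp del: norm_ge_zero)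
qed

lemma U2C_mat1: "mat 1 \<in> U2C"
  by (simp add: U2C_def)

lemma U2C_right_inverse: "W \<in> U2C \<Longrightarrow> W ** cadj W = mat 1"
  unfolding U2C_def using matrix_left_right_inverse by blast

lemma U2C_mult: "U \<in> U2C \<Longrightarrow> V \<in> U2C \<Longrightarrow> U ** V \<in> U2C"
  unfolding U2C_def by (simp add: cadj_mult matrix_mul_assoc) (metis matrix_mul_assoc matrix_mul_lid)

lemma U2C_cadj: "U \<in> U2C \<Longrightarrow> cadj U \<in> U2C"
  unfolding U2C_def by (simp add: U2C_right_inverse[unfolded U2C_def])

lemma U2C_csmult: "cnj z * z = 1 \<Longrightarrow> U \<in> U2C \<Longrightarrow> csmult z U \<in> U2C"
  unfolding U2C_def by (simp add: cadj_csmult csmult_mult mult.commute)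

lemma qmat_U2C: "norm v = 1 \<Longrightarrow> qmat v \<in> U2C"
  unfolding U2C_def by (simp add: qmat_mult_qcnj qnorm2_eq_norm)

lemma U2C_entries:
  assumes "U \<in> U2C"
  shows "U$2$2 = det U * cnj (U$1$1)" "U$2$1 = - det U * cnj (U$1$2)" "cnj (det U) * det U = 1"
proof -
  have UU: "cadj U ** U = mat 1" using assms unfolding U2C_def by simp
  have h1: "cnj (U$1$1) * U$1$1 + cnj (U$2$1) * U$2$1 = 1"
    and h2: "cnj (U$1$1) * U$1$2 + cnj (U$2$1) * U$2$2 = 0"
    and h3: "cnj (U$1$2) * U$1$1 + cnj (U$2$2) * U$2$1 = 0"
    and h4: "cnj (U$1$2) * U$1$2 + cnj (U$2$2) * U$2$2 = 1"
    using UU by (simp_all add: mat2_eq_iff mat_def)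
  have d: "det U = U$1$1 * U$2$2 - U$1$2 * U$2$1" by (simp add: det_2)
  have "det U * cnj (U$1$1) = U$2$2 * (cnj (U$1$1) * U$1$1 + cnj (U$2$1) * U$2$1)
      - U$2$1 * (cnj (U$1$1) * U$1$2 + cnj (U$2$1) * U$2$2)"
    unfolding d by (simp add: algebra_simps)
  then show "U$2$2 = det U * cnj (U$1$1)" using h1 h2 by simp
  have "- det U * cnj (U$1$2) = U$2$1 * (cnj (U$1$2) * U$1$2 + cnj (U$2$2) * U$2$2)
      - U$2$2 * (cnj (U$1$2) * U$1$1 + cnj (U$2$2) * U$2$1)"
    unfolding d by (simp add: algebra_simps)
  then show "U$2$1 = - det U * cnj (U$1$2)" using h3 h4 by simp
  have "det (cadj U) * det U = 1" using arg_cong[OF UU, of det] by (simp add: det_mul)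
  then show "cnj (det U) * det U = 1" by (simp add: det_2 mult.commute)
qed

text \<open>A unitary \<open>U\<close> with \<open>det U = w\<^sup>2\<close> has the quaternion shape after division by \<open>w\<close>.\<close>
lemma U2C_eq_csmult_qmat:
  assumes U: "U \<in> U2C"
  obtains w v where "U = csmult w (qmat v)"
proof -
  define w where "w = csqrt (det U)"
  have w2: "w * w = det U" unfolding w_def by (simp flip: power2_eq_square)
  have "cmod w * cmod w = 1"
    using U2C_entries(3)[OF U] w2 by (simp add: cnj_mult_self_eq_1_iff flip: norm_mult)
  then have "cmod w = 1" using abs_square_eq_1[of "cmod w"] by (simp add: power2_eq_square)
  then have ww: "cnj w * w = 1" by (simp add: cnj_mult_self_eq_1_iff)
  define X where "X = csmult (cnj w) U"
  have www: "cnj w * (w * w) = w" using ww by (simp flip: mult.assoc)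
  have "X$2$1 = - (cnj w * (w * w)) * cnj (U$1$2)" "X$2$2 = (cnj w * (w * w)) * cnj (U$1$1)"
    unfolding X_def w2 by (simp_all add: U2C_entries(1,2)[OF U] algebra_simps)
  then have "X$2$1 = - cnj (X$1$2)" "X$2$2 = cnj (X$1$1)"
    unfolding www by (simp_all add: X_def)
  then have "qmat (qre X) = X" by (rule qmat_qre)
  then have "U = csmult w (qmat (qre X))" unfolding X_def using ww by (simp add: mult.commute)
  then show ?thesis by (rule that)
qed

lemma U2C_subset_FU2C: "U2C \<subseteq> FU2C"
  unfolding FU2C_def by (metis (mono_tags, lifting) csmult_1 mem_Collect_eq subsetI)

lemma FU2C_csmult: "X \<in> FU2C \<Longrightarrow> csmult c X \<in> FU2C"
  unfolding FU2C_def by (auto; blast)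

lemma FU2C_mult:
  assumes "X \<in> FU2C" "Y \<in> FU2C"
  shows "X ** Y \<in> FU2C"
proof -
  obtain a b U V where "X = csmult a U" "Y = csmult b V" "U \<in> U2C" "V \<in> U2C"
    using assms unfolding FU2C_def by blast
  then have "X ** Y = csmult (a * b) (U ** V)" "U ** V \<in> U2C"
    by (simp_all add: csmult_mult U2C_mult mult.commute)
  then show ?thesis unfolding FU2C_def by blast
qed

lemma FU2C_cadj:
  assumes "X \<in> FU2C"
  shows "cadj X \<in> FU2C"
proof -
  obtain a U where "X = csmult a U" "U \<in> U2C" using assms unfolding FU2C_def by blast
  then have "cadj X = csmult (cnj a) (cadj U)" "cadj U \<in> U2C"
    by (simp_all add: cadj_csmult U2C_cadj)
  then show ?thesis unfolding FU2C_def by blast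
qed

lemma FU2C_eq_csmult_qmat: "FU2C = {csmult z (qmat v) | z v. True}"
proof (intro set_eqI iffI)
  fix X assume "X \<in> FU2C"
  then obtain \<gamma> U where "X = csmult \<gamma> U" "U \<in> U2C" unfolding FU2C_def by blast
  moreover obtain w v where "U = csmult w (qmat v)" using U2C_eq_csmult_qmat \<open>U \<in> U2C\<close> .
  ultimately have "X = csmult (\<gamma> * w) (qmat v)" by simp
  then show "X \<in> {csmult z (qmat v) | z v. True}" by blast
next
  fix X assume "X \<in> {csmult z (qmat v) | z v. True}"
  then obtain z v where X: "X = csmult z (qmat v)" by blast
  show "X \<in> FU2C"
  proof (cases "v = 0")
    case True
    then have "X = csmult 0 (mat 1)" using X linear_0[OF linear_qmat] by simp
    then show ?thesis unfolding FU2C_def using U2C_mat1 by blast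
  next
    case False
    have "X = csmult (z * of_real (norm v)) (qmat ((1 / norm v) *\<^sub>R v))"
      unfolding X qmat_scaleR scaleR_eq_csmult using False by simp
    moreover have "qmat ((1 / norm v) *\<^sub>R v) \<in> U2C" using False by (intro qmat_U2C) simp
    ultimately show ?thesis unfolding FU2C_def by blast
  qed
qed

text \<open>Only real scalars commute with a real-linear map; the phase of a complex scalar can be
  absorbed into the unitary.\<close>
lemma FU2C_eq_scaleR: "FU2C = {r *\<^sub>R U | r U. U \<in> U2C}"
proof (intro set_eqI iffI)
  fix X assume "X \<in> FU2C"
  then obtain \<gamma> U where X: "X = csmult \<gamma> U" and U: "U \<in> U2C" unfolding FU2C_def by blast
  show "X \<in> {r *\<^sub>R U | r U. U \<in> U2C}"
  proof (cases "\<gamma> = 0")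
    case True
    then show ?thesis using X U2C_mat1 by (intro CollectI exI[of _ 0] exI[of _ "mat 1"]) simp
  next
    case False
    have "cnj (sgn \<gamma>) * sgn \<gamma> = 1" using False by (simp add: cnj_mult_self_eq_1_iff norm_sgn)
    then have "csmult (sgn \<gamma>) U \<in> U2C" using U by (rule U2C_csmult)
    moreover have "X = cmod \<gamma> *\<^sub>R csmult (sgn \<gamma>) U"
      unfolding X scaleR_eq_csmult using False by (simp add: sgn_div_norm scaleR_conv_of_real field_simps)
    ultimately show ?thesis by blast
  qed
next
  fix X assume "X \<in> {r *\<^sub>R U | r U. U \<in> U2C}"
  then show "X \<in> FU2C" unfolding FU2C_def scaleR_eq_csmult by blast
qed

lemma csmult_U2C_right_inverse:
  assumes "\<gamma> \<noteq> 0" "W \<in> U2C"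
  shows "csmult \<gamma> W ** csmult (1 / \<gamma>) (cadj W) = mat 1"
  using assms U2C_right_inverse[OF assms(2)] by (simp add: csmult_mult)

lemma csmult_qmat_in_FU2C: "csmult z (qmat v) \<in> FU2C"
  unfolding FU2C_eq_csmult_qmat by blast

lemma qmat_in_FU2C: "qmat v \<in> FU2C"
  using csmult_qmat_in_FU2C[of 1 v] by simp

section \<open>The complex case\<close>

lemma linear_inj_on_quat_line:
  assumes "linear L" "inj L" "c \<noteq> 0"
  shows "linear (\<lambda>v. L (csmult c (qmat v)))" "inj (\<lambda>v. L (csmult c (qmat v)))"
  using linear_compose[OF linear_compose[OF linear_qmat linear_csmult] assms(1)] assms(2,3)
  by (auto simp: o_def intro!: injI simp: inj_eq qmat_eq_iff csmult_cancel)

lemma subspace_complex_line: "subspace (range (\<lambda>c. csmult c X))"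
  by (rule linear_subspace_image[OF linear_csmult_left subspace_UNIV])

lemma subspace_quat_multiples: "subspace (range (\<lambda>u. csmult z (qmat u)))"
  using linear_subspace_image[OF linear_compose[OF linear_qmat linear_csmult] subspace_UNIV]
  by (simp add: o_def)

lemma dim_complex_line:
  assumes "S \<subseteq> range (\<lambda>c. csmult c X)"
  shows "dim S \<le> 2"
proof -
  have "csmult c X \<in> span {X, csmult \<i> X}" for c
  proof -
    have "csmult c X = Re c *\<^sub>R X + Im c *\<^sub>R csmult \<i> X" by (rule csmult_eq_scaleR_combination)
    then show ?thesis by (simp add: span_add span_base span_scale)
  qed
  then have "S \<subseteq> span {X, csmult \<i> X}" using assms by blast
  then have "dim S \<le> card {X, csmult \<i> X}" by (rule dim_le_card) simp
  also have "\<dots> \<le> 2" by (simp add: card_insert_le_m1)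
  finally show ?thesis .
qed

lemma FU2C_linear_image_cover:
  fixes g :: "real^4 \<Rightarrow> complex^2^2"
  assumes lin: "linear g" and into: "\<And>v. g v \<in> FU2C"
    and g1: "g e1 = csmult z1 (qmat q1)" and z1: "z1 \<noteq> 0" and q1: "q1 \<noteq> 0"
  shows "g v \<in> range (\<lambda>u. csmult z1 (qmat u)) \<union> range (\<lambda>c. csmult c (qmat q1))"
proof -
  have into': "\<exists>z q. g v = csmult z (qmat q)" for v using into[of v] unfolding FU2C_eq_csmult_qmat by blast
  obtain z q where gv: "g v = csmult z (qmat q)" using into' by blast
  obtain z' q' where "g (e1 + v) = csmult z' (qmat q')" using into' by blast
  then have sum: "csmult z1 (qmat q1) + csmult z (qmat q) = csmult z' (qmat q')"
    using gv g1 lin by (simp add: linear_add)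
  show ?thesis
  proof (cases "Im (cnj z1 * z) = 0")
    case True
    then have "g v = csmult z1 (qmat (Re (z / z1) *\<^sub>R q))"
      using gv Im_cnj_mult_eq_0_imp_real_multiple[OF z1 True]
      by (simp add: qmat_scaleR scaleR_eq_csmult mult.commute)
    then show ?thesis by blast
  next
    case False
    obtain \<alpha> \<beta> where "q1 = \<alpha> *\<^sub>R q'" "q = \<beta> *\<^sub>R q'"
      using csmult_qmat_sum_parallel[OF False sum] .
    then have "q = (\<beta> / \<alpha>) *\<^sub>R q1" using q1 by auto
    then have "g v = csmult (of_real (\<beta> / \<alpha>) * z) (qmat q1)"
      using gv by (simp add: qmat_scaleR scaleR_eq_csmult mult.commute)
    then show ?thesis by blast
  qed
qed

lemma linear_into_FU2C:
  fixes g :: "real^4 \<Rightarrow> complex^2^2"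
  assumes lin: "linear g" and inj: "inj g" and into: "\<And>v. g v \<in> FU2C"
  obtains w A where "w \<noteq> 0" "linear A" "inj A" "\<And>v. g v = csmult w (qmat (A v))"
proof -
  obtain z1 q1 where g1: "g e1 = csmult z1 (qmat q1)"
    using into[of e1] unfolding FU2C_eq_csmult_qmat by blast
  have "g e1 \<noteq> g 0" using inj by (simp add: inj_eq)
  then have z1: "z1 \<noteq> 0" and q1: "q1 \<noteq> 0"
    using g1 linear_0[OF lin] linear_0[OF linear_qmat] by auto
  define W1 where "W1 = range (\<lambda>u. csmult z1 (qmat u))"
  define W2 where "W2 = range (\<lambda>c. csmult c (qmat q1))"
  have "subspace W1" "subspace W2" unfolding W1_def W2_def
    by (rule subspace_quat_multiples subspace_complex_line)+
  moreover have "subspace (range g)" by (rule linear_subspace_image[OF lin subspace_UNIV])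
  moreover have "range g \<subseteq> W1 \<union> W2"
    unfolding W1_def W2_def using FU2C_linear_image_cover[OF lin into g1 z1 q1] by blast
  ultimately have "range g \<subseteq> W1 \<or> range g \<subseteq> W2" by (rule subspace_subset_Un)
  moreover have "\<not> range g \<subseteq> W2"
  proof
    assume "range g \<subseteq> W2"
    then have "dim (range g) \<le> 2" unfolding W2_def by (rule dim_complex_line)
    moreover have "dim (range g) = dim (UNIV :: (real^4) set)"
      using dim_image_eq[OF lin] inj by (simp add: span_UNIV)
    ultimately show False by simp
  qed
  ultimately have W1: "range g \<subseteq> W1" by blast
  define A where "A v = qre (csmult (1 / z1) (g v))" for v
  have gA: "g v = csmult z1 (qmat (A v))" for v
  proof -
    obtain u where "g v = csmult z1 (qmat u)" using W1 unfolding W1_def by blast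
    then show ?thesis using z1 by (simp add: A_def)
  qed
  have "linear A"
    unfolding A_def using linear_compose[OF linear_compose[OF lin linear_csmult] linear_qre]
    by (simp add: o_def)
  moreover have "inj A"
  proof (rule injI)
    fix x y assume "A x = A y"
    then have "g x = g y" using gA by simp
    then show "x = y" using inj by (simp add: inj_eq)
  qed
  ultimately show ?thesis using that z1 gA by blast
qed

lemma unital_FU2C_preserver_quats:
  assumes lin: "linear L" and inj: "inj L" and unital: "L (mat 1) = mat 1"
    and pres: "L ` FU2C \<subseteq> FU2C"
  obtains A where "linear A" "inj A" "\<And>v. L (qmat v) = qmat (A v)"
proof -
  have "linear (\<lambda>v. L (qmat v))" "inj (\<lambda>v. L (qmat v))"
    using linear_inj_on_quat_line[OF lin inj, of 1] by simp_all
  moreover have "L (qmat v) \<in> FU2C" for v using pres qmat_in_FU2C by blast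
  ultimately obtain w A where w: "w \<noteq> 0" and A: "linear A" "inj A"
    and LA: "\<And>v. L (qmat v) = csmult w (qmat (A v))"
    using linear_into_FU2C by blast
  have A1: "csmult w (qmat (A e1)) = qmat e1" using unital LA[of e1] by (simp add: qmat_e1)
  have "Im w *\<^sub>R A e1 = 0" using arg_cong[OF A1, of qim] by simp
  moreover have "A e1 \<noteq> 0" using A1 qmat_eq_0_iff[of e1] by (auto simp: linear_0[OF linear_qmat])
  ultimately have "Im w = 0" by simp
  then have "Re w \<noteq> 0" using w by (simp add: complex_eq_iff)
  show ?thesis
  proof
    show "linear (\<lambda>v. Re w *\<^sub>R A v)"
      by (rule linearI) (simp_all add: linear_add[OF A(1)] linear_scale[OF A(1)] algebra_simps)
    show "inj (\<lambda>v. Re w *\<^sub>R A v)" using A(2) \<open>Re w \<noteq> 0\<close> by (auto intro!: injI simp: inj_eq)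
    show "L (qmat v) = qmat (Re w *\<^sub>R A v)" for v using LA \<open>Im w = 0\<close> by (simp add: csmult_qmat_real)
  qed
qed

lemma linear_into_range_qmat_not_surj:
  assumes lin: "linear L"
    and into: "\<And>v. L (qmat v) \<in> range qmat" "\<And>v. L (csmult \<i> (qmat v)) \<in> range qmat"
  shows "\<not> surj L"
proof
  assume "surj L"
  then obtain X where "L X = csmult \<i> (qmat e1)" by (metis surjD)
  moreover have "L X = L (qmat (qre X)) + L (csmult \<i> (qmat (qim X)))"
    by (subst qmat_qre_qim) (simp add: linear_add[OF lin])
  moreover have "L (qmat (qre X)) + L (csmult \<i> (qmat (qim X))) \<in> range qmat"
    using into by (intro subspace_add[OF subspace_range_qmat])
  ultimately obtain x where x: "csmult \<i> (qmat e1) = qmat x" by auto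
  show False using arg_cong[OF x, of qim] by simp
qed

lemma unital_FU2C_preserver_imag_quats:
  assumes lin: "linear L" and bij: "bij L" and pres: "L ` FU2C \<subseteq> FU2C"
    and linA: "linear A" and injA: "inj A" and LA: "\<And>v. L (qmat v) = qmat (A v)"
  obtains \<mu> where "\<mu> \<notin> \<real>" "\<And>v. L (csmult \<i> (qmat v)) = csmult \<mu> (qmat (A v))"
proof -
  have inj: "inj L" and surj: "surj L" using bij by (simp_all add: bij_def)
  have "L (csmult \<i> (qmat v)) \<in> FU2C" for v using pres csmult_qmat_in_FU2C by blast
  then obtain w B where linB: "linear B" and injB: "inj B"
    and LB: "\<And>v. L (csmult \<i> (qmat v)) = csmult w (qmat (B v))"
    using linear_into_FU2C linear_inj_on_quat_line[OF lin inj complex_i_not_zero] by blast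
  have "Im w \<noteq> 0"
    using linear_into_range_qmat_not_surj[OF lin] surj LA LB by (auto simp: csmult_qmat_real)
  then have w: "Im (cnj 1 * w) \<noteq> 0" by simp
  have "\<exists>\<alpha> \<beta> q. A v = \<alpha> *\<^sub>R q \<and> B v = \<beta> *\<^sub>R q" for v
  proof -
    have "L (csmult (1 + \<i>) (qmat v)) \<in> FU2C" using pres csmult_qmat_in_FU2C by blast
    then obtain z q where "L (csmult (1 + \<i>) (qmat v)) = csmult z (qmat q)"
      unfolding FU2C_eq_csmult_qmat by blast
    moreover have "L (csmult (1 + \<i>) (qmat v)) = csmult 1 (qmat (A v)) + csmult w (qmat (B v))"
      by (simp add: csmult_add linear_add[OF lin] LA LB)
    ultimately show ?thesis using csmult_qmat_sum_parallel[OF w] by metis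
  qed
  then obtain c where c: "\<And>v. B v = c *\<^sub>R A v"
    using linear_pointwise_parallel_imp_proportional[OF linA linB injA] by blast
  have "B e1 \<noteq> 0" using injB linear_0[OF linB] by (metis axis_nth_1(1) injD zero_index zero_neq_one)
  then have "c \<noteq> 0" using c by auto
  show ?thesis
  proof
    show "of_real c * w \<notin> \<real>" using \<open>c \<noteq> 0\<close> \<open>Im w \<noteq> 0\<close> by (simp add: complex_is_Real_iff)
    show "L (csmult \<i> (qmat v)) = csmult (of_real c * w) (qmat (A v))" for v
      by (simp add: LB c qmat_scaleR scaleR_eq_csmult mult.commute)
  qed
qed

lemma quat_form_caseII:
  assumes lin: "linear L" and unital: "L (mat 1) = mat 1" and mu: "\<mu> \<notin> \<real>"
    and linA: "linear A" and injA: "inj A" and LA: "\<And>v. L (qmat v) = qmat (A v)"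
    and LiA: "\<And>v. L (csmult \<i> (qmat v)) = csmult \<mu> (qmat (A v))"
  obtains U V a b where "caseII L U V \<mu> a b"
proof -
  have "A e1 = e1" using unital LA[of e1] by (simp add: qmat_e1 flip: qmat_eq_iff)
  with linA injA obtain u v a1 a2 a3 b1 b2 b3 where uv: "norm u = 1" "norm v = 1"
    and k: "qrot v (A (qrot u e2)) = b1 *\<^sub>R e1 + a1 *\<^sub>R e2"
      "qrot v (A (qrot u e3)) = b2 *\<^sub>R e1 + a2 *\<^sub>R e3"
      "qrot v (A (qrot u e4)) = b3 *\<^sub>R e1 + a3 *\<^sub>R e4"
    and order: "a1 \<ge> a2" "a2 \<ge> \<bar>a3\<bar>" "\<bar>a3\<bar> > 0"
    by (rule unital_quat_map_svd)
  define L' where "L' X = qmat v ** L (qmat u ** X ** cadj (qmat u)) ** cadj (qmat v)" for X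
  have L'q: "L' (qmat x) = qmat (qrot v (A (qrot u x)))" for x
    unfolding L'_def qmat_qrot LA ..
  have L'iq: "L' (csmult \<i> (qmat x)) = csmult \<mu> (L' (qmat x))" for x
    unfolding L'q unfolding L'_def qmat_conj_csmult LiA ..
  have e1: "qrot v (A (qrot u e1)) = e1"
    using \<open>A e1 = e1\<close> by (simp add: qrot_unit_e1 uv)
  define a where "a j = (if j = (1::nat) then a1 else if j = 2 then a2 else a3)" for j
  define b where "b j = (if j = (1::nat) then b1 else if j = 2 then b2 else b3)" for j
  have "L' (Sig 1) = a 1 *\<^sub>R Sig 1 + b 1 *\<^sub>R mat 1" "L' (Sig 2) = a 2 *\<^sub>R Sig 2 + b 2 *\<^sub>R mat 1"
    "L' (Sig 3) = a 3 *\<^sub>R Sig 3 + b 3 *\<^sub>R mat 1"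
    unfolding Sig_eq_qmat a_def b_def using k by (simp_all add: L'q qmat_add qmat_scaleR qmat_e1)
  moreover have "L' (csmult \<i> (Sig 1)) = csmult \<mu> (L' (Sig 1))"
    "L' (csmult \<i> (Sig 2)) = csmult \<mu> (L' (Sig 2))" "L' (csmult \<i> (Sig 3)) = csmult \<mu> (L' (Sig 3))"
    unfolding Sig_eq_qmat by (simp_all add: L'iq)
  moreover have "L' (csmult \<i> (mat 1)) = csmult \<mu> (mat 1)"
    using L'iq[of e1] L'q[of e1] unfolding e1 qmat_e1 by simp
  ultimately have "caseII L (qmat u) (qmat v) \<mu> a b"
    using qmat_U2C[OF uv(1)] qmat_U2C[OF uv(2)] mu order
    unfolding caseII_def Let_def L'_def[symmetric] by (simp add: a_def b_def)
  then show ?thesis by (rule that)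
qed

lemma caseII_quat_form:
  assumes lin: "linear L" and unital: "L (mat 1) = mat 1" and c: "caseII L U V \<mu> a b"
  defines "L' \<equiv> \<lambda>X. V ** L (U ** X ** cadj U) ** cadj V"
    and "D \<equiv> \<lambda>x. x$1 *\<^sub>R e1 + x$2 *\<^sub>R (b 1 *\<^sub>R e1 + a 1 *\<^sub>R e2)
                + x$3 *\<^sub>R (b 2 *\<^sub>R e1 + a 2 *\<^sub>R e3) + x$4 *\<^sub>R (b 3 *\<^sub>R e1 + a 3 *\<^sub>R e4)"
  shows "L' (qmat x) = qmat (D x)" "L' (csmult \<i> (qmat x)) = csmult \<mu> (qmat (D x))"
proof -
  have U: "U \<in> U2C" and V: "V \<in> U2C" and LI: "L' (csmult \<i> (mat 1)) = csmult \<mu> (mat 1)"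
    and LS: "\<And>j. j \<in> {1,2,3} \<Longrightarrow> L' (Sig j) = a j *\<^sub>R Sig j + b j *\<^sub>R mat 1 \<and>
                       L' (csmult \<i> (Sig j)) = csmult \<mu> (L' (Sig j))"
    using c unfolding caseII_def Let_def L'_def by auto
  have linL': "linear L'" unfolding L'_def using lin by (rule linear_matrix_conj)
  have L'1: "L' (mat 1) = mat 1"
    unfolding L'_def using unital U2C_right_inverse[OF U] U2C_right_inverse[OF V] by simp
  have basis: "L' (qmat e1) = qmat e1" "L' (qmat e2) = qmat (b 1 *\<^sub>R e1 + a 1 *\<^sub>R e2)"
    "L' (qmat e3) = qmat (b 2 *\<^sub>R e1 + a 2 *\<^sub>R e3)" "L' (qmat e4) = qmat (b 3 *\<^sub>R e1 + a 3 *\<^sub>R e4)"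
    using L'1 LS[of 1] LS[of 2] LS[of 3] unfolding Sig_eq_qmat
    by (simp_all add: qmat_e1 qmat_add qmat_scaleR add.commute)
  have ibasis: "L' (csmult \<i> (qmat e1)) = csmult \<mu> (L' (qmat e1))"
    "L' (csmult \<i> (qmat e2)) = csmult \<mu> (L' (qmat e2))"
    "L' (csmult \<i> (qmat e3)) = csmult \<mu> (L' (qmat e3))"
    "L' (csmult \<i> (qmat e4)) = csmult \<mu> (L' (qmat e4))"
    using LI L'1 LS[of 1] LS[of 2] LS[of 3] unfolding Sig_eq_qmat by (simp_all add: qmat_e1)
  show L'D: "L' (qmat x) = qmat (D x)"
    using linear_quat_expand[OF linL', of 1 x] by (simp add: basis D_def qmat_add qmat_scaleR)
  show "L' (csmult \<i> (qmat x)) = csmult \<mu> (qmat (D x))"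
    using linear_quat_expand[OF linL', of \<i> x] linear_quat_expand[OF linL', of 1 x]
    unfolding ibasis L'D[symmetric] by (simp add: csmult_add scaleR_eq_csmult mult.commute)
qed

lemma quat_form_image_FU2C:
  assumes lin: "linear L"
    and LD: "\<And>x. L (qmat x) = qmat (D x)" "\<And>x. L (csmult \<i> (qmat x)) = csmult \<mu> (qmat (D x))"
  shows "L ` FU2C \<subseteq> FU2C"
proof
  fix Y assume "Y \<in> L ` FU2C"
  then obtain z q where Y: "Y = L (csmult z (qmat q))" unfolding FU2C_eq_csmult_qmat by blast
  have "csmult z (qmat q) = Re z *\<^sub>R qmat q + Im z *\<^sub>R csmult \<i> (qmat q)"
    by (rule csmult_eq_scaleR_combination)
  then have "Y = Re z *\<^sub>R qmat (D q) + Im z *\<^sub>R csmult \<mu> (qmat (D q))"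
    unfolding Y by (simp add: linear_add[OF lin] linear_scale[OF lin] LD)
  also have "\<dots> = csmult (of_real (Re z) + of_real (Im z) * \<mu>) (qmat (D q))"
    by (simp add: scaleR_eq_csmult csmult_add)
  finally show "Y \<in> FU2C" by (simp add: csmult_qmat_in_FU2C)
qed

lemma caseII_image_FU2C:
  assumes lin: "linear L" and unital: "L (mat 1) = mat 1" and c: "caseII L U V \<mu> a b"
  shows "L ` FU2C \<subseteq> FU2C"
proof -
  define L' where "L' X = V ** L (U ** X ** cadj U) ** cadj V" for X
  have U: "U \<in> U2C" and V: "V \<in> U2C" using c unfolding caseII_def by simp_all
  have "linear L'" unfolding L'_def using lin by (rule linear_matrix_conj)
  then have L': "L' ` FU2C \<subseteq> FU2C"
    using caseII_quat_form[OF lin unital c] unfolding L'_def by (rule quat_form_image_FU2C)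
  have "U ** (cadj U ** X ** U) ** cadj U = (U ** cadj U) ** X ** (U ** cadj U)" for X
    by (simp add: matrix_mul_assoc)
  then have UX: "U ** (cadj U ** X ** U) ** cadj U = X" for X
    using U2C_right_inverse[OF U] by simp
  have "cadj V ** (V ** Y ** cadj V) ** V = (cadj V ** V) ** Y ** (cadj V ** V)" for Y
    by (simp add: matrix_mul_assoc)
  then have VY: "cadj V ** (V ** Y ** cadj V) ** V = Y" for Y
    using V by (simp add: U2C_def)
  have "L X = cadj V ** L' (cadj U ** X ** U) ** V" for X
    unfolding L'_def UX VY ..
  moreover have "cadj U ** X ** U \<in> FU2C" if "X \<in> FU2C" for X
    using that U V U2C_subset_FU2C by (blast intro: FU2C_mult FU2C_cadj)
  ultimately show ?thesis
    using L' U V U2C_subset_FU2C by (auto intro!: FU2C_mult FU2C_cadj)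
qed

lemma unital_FU2C_preserver_iff_caseII:
  assumes lin: "linear L" and bij: "bij L" and unital: "L (mat 1) = mat 1"
  shows "L ` FU2C \<subseteq> FU2C \<longleftrightarrow> (\<exists>U V \<mu> a b. caseII L U V \<mu> a b)"
proof
  assume pres: "L ` FU2C \<subseteq> FU2C"
  obtain A where A: "linear A" "inj A" and LA: "\<And>v. L (qmat v) = qmat (A v)"
    using unital_FU2C_preserver_quats[OF lin bij_is_inj[OF bij] unital pres] by blast
  obtain \<mu> where "\<mu> \<notin> \<real>" "\<And>v. L (csmult \<i> (qmat v)) = csmult \<mu> (qmat (A v))"
    using unital_FU2C_preserver_imag_quats[OF lin bij pres A LA] by blast
  then obtain U V a b where "caseII L U V \<mu> a b"
    using quat_form_caseII[OF lin unital _ A LA] by blast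
  then show "\<exists>U V \<mu> a b. caseII L U V \<mu> a b" by blast
next
  assume "\<exists>U V \<mu> a b. caseII L U V \<mu> a b"
  then show "L ` FU2C \<subseteq> FU2C" using caseII_image_FU2C[OF lin unital] by blast
qed

lemma normalized_U2C_preserver:
  fixes T :: "complex^2^2 \<Rightarrow> complex^2^2"
  assumes lin: "linear T" and bij: "bij T"
    and TI: "\<gamma> \<noteq> 0" "W \<in> U2C" "T (mat 1) = csmult \<gamma> W"
  shows "linear (\<lambda>X. matrix_inv (T (mat 1)) ** T X)" "bij (\<lambda>X. matrix_inv (T (mat 1)) ** T X)"
    "matrix_inv (T (mat 1)) ** T (mat 1) = mat 1"
    "T ` U2C \<subseteq> FU2C \<longleftrightarrow> (\<lambda>X. matrix_inv (T (mat 1)) ** T X) ` FU2C \<subseteq> FU2C"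
proof -
  define M' where "M' = csmult (1 / \<gamma>) (cadj W)"
  have MM': "T (mat 1) ** M' = mat 1" unfolding M'_def TI(3) using TI(1,2) by (rule csmult_U2C_right_inverse)
  then have M'M: "M' ** T (mat 1) = mat 1" using matrix_left_right_inverse by blast
  have inv: "matrix_inv (T (mat 1)) = M'" using MM' by (rule matrix_inv_eqI)
  show "linear (\<lambda>X. matrix_inv (T (mat 1)) ** T X)"
    using linear_compose[OF lin linear_matrix_mult_left] by (simp add: o_def)
  show "bij (\<lambda>X. matrix_inv (T (mat 1)) ** T X)" unfolding inv using M'M bij by (rule bij_matrix_mult_left)
  show "matrix_inv (T (mat 1)) ** T (mat 1) = mat 1" unfolding inv by (rule M'M)
  have "T (mat 1) \<in> FU2C" "M' \<in> FU2C"
    unfolding TI(3) M'_def using TI(2) U2C_subset_FU2C by (auto intro: FU2C_csmult U2C_cadj)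
  then have "T ` FU2C \<subseteq> FU2C \<longleftrightarrow> (\<lambda>X. M' ** T X) ` FU2C \<subseteq> FU2C"
    using MM' FU2C_mult by (intro mult_closed_image_subset_iff) auto
  then show "T ` U2C \<subseteq> FU2C \<longleftrightarrow> (\<lambda>X. matrix_inv (T (mat 1)) ** T X) ` FU2C \<subseteq> FU2C"
    unfolding inv using linear_image_subset_scaled_iff[OF lin, of U2C] by (simp add: FU2C_eq_scaleR)
qed

lemma U2C_preserver_normalizable:
  fixes T :: "complex^2^2 \<Rightarrow> complex^2^2"
  assumes lin: "linear T" and inj: "inj T" and pres: "T ` U2C \<subseteq> FU2C"
  shows "\<exists>\<gamma> W. \<gamma> \<noteq> 0 \<and> W \<in> U2C \<and> T (mat 1) = csmult \<gamma> W"
proof -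
  obtain \<gamma> W where TI: "T (mat 1) = csmult \<gamma> W" and W: "W \<in> U2C"
    using pres U2C_mat1 unfolding FU2C_def by blast
  have "mat 1 \<noteq> (0::complex^2^2)" by (simp add: mat2_eq_iff mat_def)
  then have "T (mat 1) \<noteq> T 0" using inj by (simp add: inj_eq)
  then have "\<gamma> \<noteq> 0" using TI linear_0[OF lin] by auto
  then show ?thesis using TI W by blast
qed

lemma complex_case:
  fixes T :: "complex^2^2 \<Rightarrow> complex^2^2"
  assumes lin: "linear T" and bij: "bij T"
  shows "T ` U2C \<subseteq> FU2C \<longleftrightarrow>
    (\<exists>\<gamma> W. \<gamma> \<noteq> 0 \<and> W \<in> U2C \<and> T (mat 1) = csmult \<gamma> W) \<and>
    (\<exists>U V \<mu> a b. caseII (\<lambda>X. matrix_inv (T (mat 1)) ** T X) U V \<mu> a b)"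
proof (cases "\<exists>\<gamma> W. \<gamma> \<noteq> 0 \<and> W \<in> U2C \<and> T (mat 1) = csmult \<gamma> W")
  case True
  then obtain \<gamma> W where TI: "\<gamma> \<noteq> 0" "W \<in> U2C" "T (mat 1) = csmult \<gamma> W" by blast
  let ?L = "\<lambda>X. matrix_inv (T (mat 1)) ** T X"
  have "?L ` FU2C \<subseteq> FU2C \<longleftrightarrow> (\<exists>U V \<mu> a b. caseII ?L U V \<mu> a b)"
    using normalized_U2C_preserver(1-3)[OF lin bij TI] by (rule unital_FU2C_preserver_iff_caseII)
  then show ?thesis using normalized_U2C_preserver(4)[OF lin bij TI] True by blast
next
  case False
  then have "\<not> T ` U2C \<subseteq> FU2C" using U2C_preserver_normalizable[OF lin] bij bij_def by blast
  with False show ?thesis by blast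
qed

lemma caseII_complex_linear_mu:
  assumes cl: "\<And>c X. L (csmult c X) = csmult c (L X)" and unital: "L (mat 1) = mat 1"
    and c: "caseII L U V \<mu> a b"
  shows "\<mu> = \<i>"
proof -
  have U: "U \<in> U2C" and V: "V \<in> U2C"
    and LI: "V ** L (U ** csmult \<i> (mat 1) ** cadj U) ** cadj V = csmult \<mu> (mat 1)"
    using c unfolding caseII_def Let_def by auto
  have "V ** L (U ** csmult \<i> (mat 1) ** cadj U) ** cadj V = csmult \<i> (mat 1)"
    using U2C_right_inverse[OF U] U2C_right_inverse[OF V] by (simp add: csmult_mult cl unital)
  then have "csmult \<mu> (mat 1) $ 1 $ 1 = csmult \<i> (mat 1 :: complex^2^2) $ 1 $ 1" using LI by simp
  then show ?thesis by (simp add: mat_def)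
qed

section \<open>The real case\<close>

lemma Eunit_nth [simp]: "Eunit i j $ a $ b = (if a = i \<and> b = j then 1 else 0)"
  by (simp add: Eunit_def)

lemma V1_eq: "V1 = {X. X$1$1 = X$2$2 \<and> X$1$2 = - X$2$1}"
proof -
  have "X \<in> V1 \<longleftrightarrow> (\<exists>s t. X = s *\<^sub>R mat 1 + t *\<^sub>R (Eunit 1 2 - Eunit 2 1))" for X
    unfolding V1_def span_insert span_singleton by (auto simp: algebra_simps)
  moreover have "(\<exists>s t. X = s *\<^sub>R mat 1 + t *\<^sub>R (Eunit 1 2 - Eunit 2 1)) \<longleftrightarrow>
      X$1$1 = X$2$2 \<and> X$1$2 = - X$2$1" for X :: "real^2^2"
    by (auto simp: mat2_eq_iff mat_def intro!: exI[of _ "X$1$1"] exI[of _ "X$1$2"])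
  ultimately show ?thesis by blast
qed

lemma V2_eq: "V2 = {X. X$1$1 = - X$2$2 \<and> X$1$2 = X$2$1}"
proof -
  have "X \<in> V2 \<longleftrightarrow> (\<exists>s t. X = s *\<^sub>R (Eunit 1 1 - Eunit 2 2) + t *\<^sub>R (Eunit 1 2 + Eunit 2 1))" for X
    unfolding V2_def span_insert span_singleton by (auto simp: algebra_simps)
  moreover have "(\<exists>s t. X = s *\<^sub>R (Eunit 1 1 - Eunit 2 2) + t *\<^sub>R (Eunit 1 2 + Eunit 2 1)) \<longleftrightarrow>
      X$1$1 = - X$2$2 \<and> X$1$2 = X$2$1" for X :: "real^2^2"
    by (auto simp: mat2_eq_iff intro!: exI[of _ "X$1$1"] exI[of _ "X$1$2"])
  ultimately show ?thesis by blast
qed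

lemma subspace_V1: "subspace V1"
  unfolding V1_def by (rule subspace_span)

lemma subspace_V2: "subspace V2"
  unfolding V2_def by (rule subspace_span)

lemma V1_V2_decomp: "\<exists>A\<in>V1. \<exists>B\<in>V2. X = A + B"
proof -
  define p where "p = (X$1$1 + X$2$2) / 2"
  define q where "q = (X$1$2 - X$2$1) / 2"
  define r where "r = (X$1$1 - X$2$2) / 2"
  define s where "s = (X$1$2 + X$2$1) / 2"
  have "vector [vector [p, q], vector [-q, p]] \<in> V1" "vector [vector [r, s], vector [s, -r]] \<in> V2"
    unfolding V1_eq V2_eq by simp_all
  moreover have "X = vector [vector [p, q], vector [-q, p]] + vector [vector [r, s], vector [s, -r]]"
    unfolding p_def q_def r_def s_def by (simp add: mat2_eq_iff field_simps)
  ultimately show ?thesis by blast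
qed

lemma V1_Int_V2: "V1 \<inter> V2 \<subseteq> {0}"
  unfolding V1_eq V2_eq by (auto simp: mat2_eq_iff)

lemma mat1_in_V1: "mat 1 \<in> V1" and mat1_notin_V2: "mat 1 \<notin> V2"
  unfolding V1_eq V2_eq by (simp_all add: mat_def)

lemma V1_neq_UNIV: "V1 \<noteq> UNIV"
proof
  assume "V1 = UNIV"
  then have "Eunit 1 1 - Eunit 2 2 \<in> V1" by simp
  then show False unfolding V1_eq by simp
qed

lemma U2R_mat1: "mat 1 \<in> U2R"
  by (simp add: U2R_def)

lemma U2R_right_inverse: "W \<in> U2R \<Longrightarrow> W ** transpose W = mat 1"
  unfolding U2R_def using matrix_left_right_inverse by blast

lemma U2R_mult: "U \<in> U2R \<Longrightarrow> V \<in> U2R \<Longrightarrow> U ** V \<in> U2R"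
  unfolding U2R_def by (simp add: matrix_transpose_mul matrix_mul_assoc) (metis matrix_mul_assoc matrix_mul_lid)

lemma U2R_transpose: "U \<in> U2R \<Longrightarrow> transpose U \<in> U2R"
  unfolding U2R_def by (simp add: U2R_right_inverse[unfolded U2R_def])

lemma orthogonal_2x2_cases:
  fixes a b c d :: real
  assumes h1: "a^2 + c^2 = 1" and h2: "b^2 + d^2 = 1" and h3: "a*b + c*d = 0"
  shows "(a = d \<and> b = -c) \<or> (a = -d \<and> b = c)"
proof -
  define k where "k = a*d - b*c"
  have e: "c*d = -(a*b)" "a*b = -(c*d)" using h3 by linarith+
  have "-c*k = -a*(c*d) + b*c^2" unfolding k_def by (simp add: algebra_simps power2_eq_square)
  also have "\<dots> = b*(a^2+c^2)" by (simp add: e(1) algebra_simps power2_eq_square)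
  finally have b: "b = -c*k" using h1 by simp
  have "a*k = d*a^2 - c*(a*b)" unfolding k_def by (simp add: algebra_simps power2_eq_square)
  also have "\<dots> = d*(a^2+c^2)" by (simp add: e(2) algebra_simps power2_eq_square)
  finally have d: "d = a*k" using h1 by simp
  have "b^2 + d^2 = k^2 * (a^2+c^2)" using b d by (simp add: algebra_simps power2_eq_square)
  then have "k^2 = 1" using h1 h2 by simp
  then have "k = 1 \<or> k = -1" by (simp add: power2_eq_1_iff)
  then show ?thesis using b d by auto
qed

lemma U2R_entries:
  "U \<in> U2R \<longleftrightarrow> U$1$1^2 + U$2$1^2 = 1 \<and> U$1$2^2 + U$2$2^2 = 1 \<and> U$1$1*U$1$2 + U$2$1*U$2$2 = 0"
  unfolding U2R_def mat2_eq_iff transpose_def mat_def power2_eq_square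
  by (auto simp: algebra_simps)

lemma FU2R_eq_V1_Un_V2: "FU2R = V1 \<union> V2"
proof (intro set_eqI iffI)
  fix X assume "X \<in> FU2R"
  then obtain \<gamma> U where X: "X = \<gamma> *\<^sub>R U" and U: "U \<in> U2R" unfolding FU2R_def by auto
  from U have "(U$1$1 = U$2$2 \<and> U$1$2 = - U$2$1) \<or> (U$1$1 = - U$2$2 \<and> U$1$2 = U$2$1)"
    unfolding U2R_entries using orthogonal_2x2_cases by blast
  then show "X \<in> V1 \<union> V2" unfolding V1_eq V2_eq X by auto
next
  fix X assume X: "X \<in> V1 \<union> V2"
  define r where "r = sqrt (X$1$1^2 + X$2$1^2)"
  show "X \<in> FU2R"
  proof (cases "r = 0")
    case True
    then have "X$1$1 = 0" "X$2$1 = 0" unfolding r_def by (simp_all add: sum_power2_eq_zero_iff)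
    with X have "X = 0 *\<^sub>R mat 1" unfolding V1_eq V2_eq by (auto simp: mat2_eq_iff)
    then show ?thesis unfolding FU2R_def using U2R_mat1 by blast
  next
    case False
    then have r: "r > 0" "r^2 = X$1$1^2 + X$2$1^2" unfolding r_def by (simp_all add: sum_power2_gt_zero_iff)
    have s2: "X$1$2^2 + X$2$2^2 = r^2" "X$1$1*X$1$2 + X$2$1*X$2$2 = 0"
      using X r unfolding V1_eq V2_eq by (auto simp: algebra_simps power2_eq_square)
    have "r^2 \<noteq> 0" using r(1) by simp
    then have "(X$1$1/r)^2 + (X$2$1/r)^2 = 1" "(X$1$2/r)^2 + (X$2$2/r)^2 = 1"
      "(X$1$1/r)*(X$1$2/r) + (X$2$1/r)*(X$2$2/r) = 0"
      using r(2) s2 by (simp_all add: power_divide add_divide_distrib[symmetric])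
    then have "(1/r) *\<^sub>R X \<in> U2R" unfolding U2R_entries by simp
    moreover have "X = r *\<^sub>R ((1/r) *\<^sub>R X)" using r by simp
    ultimately show ?thesis unfolding FU2R_def by blast
  qed
qed

lemma FU2R_mult:
  assumes "X \<in> FU2R" "Y \<in> FU2R"
  shows "X ** Y \<in> FU2R"
proof -
  obtain a b U V where "X = a *\<^sub>R U" "Y = b *\<^sub>R V" "U \<in> U2R" "V \<in> U2R"
    using assms unfolding FU2R_def by blast
  then have "X ** Y = (a * b) *\<^sub>R (U ** V)" "U ** V \<in> U2R"
    by (simp_all add: matrix_scalar_ac scalar_matrix_assoc[symmetric] U2R_mult)
  then show ?thesis unfolding FU2R_def by blast
qed

lemma unital_FU2R_preserver_iff:
  fixes L :: "real^2^2 \<Rightarrow> real^2^2"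
  assumes lin: "linear L" and bij: "bij L" and unital: "L (mat 1) = mat 1"
  shows "L ` FU2R \<subseteq> FU2R \<longleftrightarrow> L ` V1 = V1 \<and> L ` V2 = V2"
proof
  assume "L ` FU2R \<subseteq> FU2R"
  then have pres: "L ` (V1 \<union> V2) \<subseteq> V1 \<union> V2" by (simp add: FU2R_eq_V1_Un_V2)
  have surj: "surj L" using bij by (simp add: bij_def)
  have "L ` V1 \<subseteq> V1 \<or> L ` V1 \<subseteq> V2"
    using pres by (intro subspace_subset_Un subspace_V1 subspace_V2 linear_subspace_image[OF lin]) auto
  moreover have "\<not> L ` V1 \<subseteq> V2"
  proof
    assume "L ` V1 \<subseteq> V2"
    then have "L (mat 1) \<in> V2" using mat1_in_V1 by blast
    then show False using unital mat1_notin_V2 by simp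
  qed
  ultimately have LV1: "L ` V1 \<subseteq> V1" by blast
  have "L ` V2 \<subseteq> V1 \<or> L ` V2 \<subseteq> V2"
    using pres by (intro subspace_subset_Un subspace_V1 subspace_V2 linear_subspace_image[OF lin]) auto
  moreover have "\<not> L ` V2 \<subseteq> V1"
  proof
    assume "L ` V2 \<subseteq> V1"
    have LX: "L X \<in> V1" for X
    proof -
      obtain A B where "A \<in> V1" "B \<in> V2" "X = A + B" using V1_V2_decomp by blast
      then show ?thesis using LV1 \<open>L ` V2 \<subseteq> V1\<close> lin subspace_V1 by (auto simp: linear_add intro: subspace_add)
    qed
    have "range L \<subseteq> V1" using LX by blast
    then show False using surj V1_neq_UNIV by auto
  qed
  ultimately have LV2: "L ` V2 \<subseteq> V2" by blast
  show "L ` V1 = V1 \<and> L ` V2 = V2"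
    using linear_image_eq_of_complement[OF lin surj subspace_V1 subspace_V2 V1_V2_decomp V1_Int_V2 LV1 LV2]
    by blast
next
  assume "L ` V1 = V1 \<and> L ` V2 = V2"
  then show "L ` FU2R \<subseteq> FU2R" by (auto simp: FU2R_eq_V1_Un_V2)
qed

lemma normalized_U2R_preserver:
  fixes T :: "real^2^2 \<Rightarrow> real^2^2"
  assumes lin: "linear T" and bij: "bij T"
    and TI: "\<gamma> \<noteq> 0" "W \<in> U2R" "T (mat 1) = \<gamma> *\<^sub>R W"
  shows "linear (\<lambda>X. matrix_inv (T (mat 1)) ** T X)" "bij (\<lambda>X. matrix_inv (T (mat 1)) ** T X)"
    "matrix_inv (T (mat 1)) ** T (mat 1) = mat 1"
    "T ` U2R \<subseteq> FU2R \<longleftrightarrow> (\<lambda>X. matrix_inv (T (mat 1)) ** T X) ` FU2R \<subseteq> FU2R"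
proof -
  define M' where "M' = (1 / \<gamma>) *\<^sub>R transpose W"
  have MM': "T (mat 1) ** M' = mat 1" unfolding M'_def TI(3)
    using TI(1) U2R_right_inverse[OF TI(2)] by (simp add: matrix_scalar_ac scalar_matrix_assoc[symmetric])
  then have M'M: "M' ** T (mat 1) = mat 1" using matrix_left_right_inverse by blast
  have inv: "matrix_inv (T (mat 1)) = M'" using MM' by (rule matrix_inv_eqI)
  show "linear (\<lambda>X. matrix_inv (T (mat 1)) ** T X)"
    using linear_compose[OF lin linear_matrix_mult_left] by (simp add: o_def)
  show "bij (\<lambda>X. matrix_inv (T (mat 1)) ** T X)" unfolding inv using M'M bij by (rule bij_matrix_mult_left)
  show "matrix_inv (T (mat 1)) ** T (mat 1) = mat 1" unfolding inv by (rule M'M)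
  have "T (mat 1) \<in> FU2R" "M' \<in> FU2R"
    unfolding TI(3) M'_def FU2R_def using TI(2) U2R_transpose by blast+
  then have "T ` FU2R \<subseteq> FU2R \<longleftrightarrow> (\<lambda>X. M' ** T X) ` FU2R \<subseteq> FU2R"
    using MM' FU2R_mult by (intro mult_closed_image_subset_iff) auto
  then show "T ` U2R \<subseteq> FU2R \<longleftrightarrow> (\<lambda>X. matrix_inv (T (mat 1)) ** T X) ` FU2R \<subseteq> FU2R"
    unfolding inv using linear_image_subset_scaled_iff[OF lin, of U2R] by (simp add: FU2R_def)
qed

lemma real_case:
  fixes T :: "real^2^2 \<Rightarrow> real^2^2"
  assumes lin: "linear T" and bij: "bij T"
  shows "T ` U2R \<subseteq> FU2R \<longleftrightarrow>
    (\<exists>\<gamma> W. \<gamma> \<noteq> 0 \<and> W \<in> U2R \<and> T (mat 1) = \<gamma> *\<^sub>R W) \<and>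
    (let L = (\<lambda>X. matrix_inv (T (mat 1)) ** T X) in L ` V1 = V1 \<and> L ` V2 = V2)"
proof (cases "\<exists>\<gamma> W. \<gamma> \<noteq> 0 \<and> W \<in> U2R \<and> T (mat 1) = \<gamma> *\<^sub>R W")
  case True
  then obtain \<gamma> W where TI: "\<gamma> \<noteq> 0" "W \<in> U2R" "T (mat 1) = \<gamma> *\<^sub>R W" by blast
  let ?L = "\<lambda>X. matrix_inv (T (mat 1)) ** T X"
  have "?L ` FU2R \<subseteq> FU2R \<longleftrightarrow> ?L ` V1 = V1 \<and> ?L ` V2 = V2"
    using normalized_U2R_preserver(1-3)[OF lin bij TI] by (rule unital_FU2R_preserver_iff)
  then show ?thesis using normalized_U2R_preserver(4)[OF lin bij TI] True by (simp add: Let_def)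
next
  case False
  have "\<not> T ` U2R \<subseteq> FU2R"
  proof
    assume "T ` U2R \<subseteq> FU2R"
    then obtain \<gamma> W where TI: "T (mat 1) = \<gamma> *\<^sub>R W" and W: "W \<in> U2R"
      using U2R_mat1 unfolding FU2R_def by blast
    have "mat 1 \<noteq> (0::real^2^2)" by (simp add: mat2_eq_iff mat_def)
    then have "T (mat 1) \<noteq> T 0" using bij by (simp add: bij_def inj_eq)
    then have "\<gamma> \<noteq> 0" using TI linear_0[OF lin] by auto
    then show False using False TI W by blast
  qed
  with False show ?thesis by blast
qed

theorem mainTheorem8:
  shows
  "(\<forall>T :: real^2^2 \<Rightarrow> real^2^2. linear T \<and> bij T \<longrightarrow>
      (T ` U2R \<subseteq> FU2R \<longleftrightarrow>
        (\<exists>\<gamma> W. \<gamma> \<noteq> 0 \<and> W \<in> U2R \<and> T (mat 1) = \<gamma> *\<^sub>R W) \<and>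
        (let L = (\<lambda>X. matrix_inv (T (mat 1)) ** T X) in L ` V1 = V1 \<and> L ` V2 = V2))) \<and>
   (\<forall>T :: complex^2^2 \<Rightarrow> complex^2^2. linear T \<and> bij T \<longrightarrow>
      (T ` U2C \<subseteq> FU2C \<longleftrightarrow>
        (\<exists>\<gamma> W. \<gamma> \<noteq> 0 \<and> W \<in> U2C \<and> T (mat 1) = csmult \<gamma> W) \<and>
        (let L = (\<lambda>X. matrix_inv (T (mat 1)) ** T X) in
           \<exists>U V \<mu> a b. caseII L U V \<mu> a b))) \<and>
   (\<forall>T :: complex^2^2 \<Rightarrow> complex^2^2. linear T \<and> bij T \<and> complex_linear T \<and>
      T ` U2C \<subseteq> FU2C \<longrightarrow>
      (\<forall>U V \<mu> a b. caseII (\<lambda>X. matrix_inv (T (mat 1)) ** T X) U V \<mu> a b \<longrightarrow> \<mu> = \<i>))"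
proof (intro conjI allI impI)
  fix T :: "real^2^2 \<Rightarrow> real^2^2"
  assume "linear T \<and> bij T"
  then show "T ` U2R \<subseteq> FU2R \<longleftrightarrow>
      (\<exists>\<gamma> W. \<gamma> \<noteq> 0 \<and> W \<in> U2R \<and> T (mat 1) = \<gamma> *\<^sub>R W) \<and>
      (let L = (\<lambda>X. matrix_inv (T (mat 1)) ** T X) in L ` V1 = V1 \<and> L ` V2 = V2)"
    by (intro real_case) simp_all
next
  fix T :: "complex^2^2 \<Rightarrow> complex^2^2"
  assume "linear T \<and> bij T"
  then show "T ` U2C \<subseteq> FU2C \<longleftrightarrow>
      (\<exists>\<gamma> W. \<gamma> \<noteq> 0 \<and> W \<in> U2C \<and> T (mat 1) = csmult \<gamma> W) \<and>
      (let L = (\<lambda>X. matrix_inv (T (mat 1)) ** T X) in \<exists>U V \<mu> a b. caseII L U V \<mu> a b)"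
    unfolding Let_def by (intro complex_case) simp_all
next
  fix T :: "complex^2^2 \<Rightarrow> complex^2^2" and U V \<mu> a b
  assume T: "linear T \<and> bij T \<and> complex_linear T \<and> T ` U2C \<subseteq> FU2C"
    and c: "caseII (\<lambda>X. matrix_inv (T (mat 1)) ** T X) U V \<mu> a b"
  then obtain \<gamma> W where "\<gamma> \<noteq> 0" "W \<in> U2C" "T (mat 1) = csmult \<gamma> W"
    using U2C_preserver_normalizable bij_is_inj by blast
  then have "matrix_inv (T (mat 1)) ** T (mat 1) = mat 1"
    using T normalized_U2C_preserver(3) by blast
  moreover have "matrix_inv (T (mat 1)) ** T (csmult z X) = csmult z (matrix_inv (T (mat 1)) ** T X)" for z X
    using T by (simp add: complex_linear_def csmult_mult)
  ultimately show "\<mu> = \<i>" using c by (intro caseII_complex_linear_mu)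
qed

end
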